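(* Let $d\geq1$, $M\in\mathbb{N}_{\geq2}$, $p\in(1/M,1]$, let $F$ be the fractal percolation in $[0,1]^d$ with parameters $M,p$, $D=\log(M^dp)/\log M$, $r=1/M$, and let $C_n$ and $C_n^j$ be as in the context. Then for each $k\in\{0,\ldots,d\}$ with $k<D$ the limit $$\overline{\mathcal V}^c_k(F):=\lim_{n\to\infty} r^{n(D-k)}\mathbb{E}V_k(C_n)$$ exists and equals $$q_{d,k}\frac{M^{d-k}(1-p)}{M^{d-k}p-1}+\sum_{T\subset\{1,\ldots,M^d\},\,|T|\geq2}(-1)^{|T|-1}\sum_{n=1}^\infty r^{n(D-k)}\mathbb{E}V_k\Big(\bigcap_{j\in T}C_n^j\Big),$$ where $q_{d,k}=V_k([0,1]^d)$ and all series converge.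
   Context: Fractal percolation: $J=[0,1]^d$, $F_0:=J$; given $F_{n-1}$, a union of closed grid cubes of side $M^{-(n-1)}$, each such cube is divided into $M^d$ closed subcubes of side $M^{-n}$, each kept independently (of everything else) with probability $p$; $F_n$ is the union of kept subcubes. $J_1,\ldots,J_{M^d}$ are the closed subcubes of side $1/M$ of $J$. $C_n:=\overline{J\setminus F_n}$ (closure), which is the union of all level-$n$ grid cubes (side $M^{-n}$) not belonging to $F_n$; $C_n^j$ is the union of those level-$n$ grid cubes contained in $J_j$ that do not belong to $F_n$. $V_k$ denote intrinsic volumes, additively extended to finite unions of compact convex sets, $V_k(\emptyset)=0$. *)

theory Defs
  imports "HOL-Probability.Probability"
begin

text \<open>Intrinsic volume V_k of a (possibly degenerate) nonempty axis-parallel box: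
  the k-th elementary symmetric polynomial of its side lengths; V_k of the empty set is 0.\<close>
definition box_V :: "nat \<Rightarrow> (real^'n) set \<Rightarrow> real" where
  "box_V k X = (if X = {} then 0 else
     (\<Sum>S\<in>{S::'n set. card S = k}.
        \<Prod>j\<in>S. (Sup ((\<lambda>x. x$j) ` X) - Inf ((\<lambda>x. x$j) ` X))))"

definition is_box :: "(real^'n) set \<Rightarrow> bool" where
  "is_box X \<longleftrightarrow> (\<exists>a b. a \<le> b \<and> X = cbox a b)"

definition intrinsic_volume :: "nat \<Rightarrow> (real^'n) set \<Rightarrow> real" where
  "intrinsic_volume k A = (SOME v. \<exists>B. finite B \<and> (\<forall>X\<in>B. is_box X) \<and> A = \<Union>B \<and>
      v = (\<Sum>S\<in>{S. S \<subseteq> B \<and> S \<noteq> {}}. (-1) ^ (card S + 1) * box_V k (\<Inter>S)))"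

definition grid_cube :: "nat \<Rightarrow> nat \<Rightarrow> ('n \<Rightarrow> nat) \<Rightarrow> (real^'n) set" where
  "grid_cube M n i = cbox (\<chi> j. real (i j) / real M ^ n) (\<chi> j. real (i j + 1) / real M ^ n)"

definition grid_idx :: "nat \<Rightarrow> nat \<Rightarrow> ('n \<Rightarrow> nat) set" where
  "grid_idx M n = {i. \<forall>j. i j < M ^ n}"

text \<open>kept M X n i: the level-n cube i belongs to F_n, where X n i is the coin
  of level-n cube i (n \<ge> 1); the unique level-0 cube J is always kept.\<close>
fun kept :: "nat \<Rightarrow> (nat \<Rightarrow> ('n \<Rightarrow> nat) \<Rightarrow> bool) \<Rightarrow> nat \<Rightarrow> ('n \<Rightarrow> nat) \<Rightarrow> bool" where
  "kept M X 0 i = True"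
| "kept M X (Suc n) i = (kept M X n (\<lambda>j. i j div M) \<and> X (Suc n) i)"

definition Cset :: "nat \<Rightarrow> (nat \<Rightarrow> ('n \<Rightarrow> nat) \<Rightarrow> bool) \<Rightarrow> nat \<Rightarrow> (real^'n) set" where
  "Cset M X n = \<Union>{grid_cube M n i | i. i \<in> grid_idx M n \<and> \<not> kept M X n i}"

definition Cset_sub :: "nat \<Rightarrow> (nat \<Rightarrow> ('n \<Rightarrow> nat) \<Rightarrow> bool) \<Rightarrow> nat \<Rightarrow> ('n \<Rightarrow> nat) \<Rightarrow> (real^'n) set" where
  "Cset_sub M X n jj = \<Union>{grid_cube M n i | i. i \<in> grid_idx M n \<and>
       grid_cube M n i \<subseteq> grid_cube M 1 jj \<and> \<not> kept M X n i}"

end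

theory Submission
  imports Defs
begin

text \<open>
  Intrinsic volumes of finite unions of grid boxes are computed by a cell valuation: the
  hyperplanes through the box faces cut space into relatively open cells, and every cell inside
  the set contributes a signed product of edge lengths. This valuation is additive and agrees
  with \<^const>\<open>box_V\<close> on boxes; hence \<^const>\<open>intrinsic_volume\<close> is well defined, satisfies
  inclusion-exclusion, scales by \<open>c ^ k\<close> under \<open>x \<mapsto> c x + t\<close>, and is small on sets that lie
  in few hyperplanes.

  By self-similarity, the part of \<open>C_(n+1)\<close> in a level-1 cube \<open>J_j\<close> is all of \<open>J_j\<close> if \<open>J_j\<close> is
  discarded, and otherwise a copy of \<open>C_n\<close> scaled by \<open>1/M\<close> and built from independent coins.
  Inclusion-exclusion over the \<open>M^d\<close> parts gives the renewal equation
  \<open>a_(n+1) = M^(d-k) ((1 - p) q + p a_n) + b_(n+1)\<close> for \<open>a_n = E V_k(C_n)\<close>, where \<open>b_n\<close> collects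
  the expected intrinsic volumes of intersections of parts. These intersections lie in the walls
  \<open>x_l = a/M\<close>, so \<open>b_n = O(M^(n (d-1-k)))\<close>. With \<open>\<rho> = r^(D-k) = M^k / (M^d p) < 1\<close>, the series
  \<open>\<Sum> \<rho>^n b_n\<close> is dominated by a geometric series of ratio \<open>1/(M p) < 1\<close>, and solving the
  renewal equation gives the limit of \<open>\<rho>^n a_n\<close>.
\<close>

section \<open>A cell valuation for unions of grid boxes\<close>

text \<open>The points of a finite set \<open>g \<subseteq> \<real>\<close> cut the line into vertices \<open>(u, u)\<close> and open edges
  \<open>(u, v)\<close>, \<open>u < v\<close>, between consecutive points; a cell is represented by its endpoints.\<close>

definition line_cells :: "real set \<Rightarrow> (real \<times> real) set" where
  "line_cells g = {(u, v). u \<in> g \<and> v \<in> g \<and> u \<le> v \<and> (\<forall>w\<in>g. \<not> (u < w \<and> w < v))}"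

definition cell_mid :: "real \<times> real \<Rightarrow> real" where
  "cell_mid c = (fst c + snd c) / 2"

definition cells_between :: "real \<Rightarrow> real \<Rightarrow> real set \<Rightarrow> (real \<times> real) set" where
  "cells_between a b g = {c \<in> line_cells g. a \<le> fst c \<and> snd c \<le> b}"

lemma finite_line_cells: "finite g \<Longrightarrow> finite (line_cells g)"
  by (rule finite_subset[of _ "g \<times> g"]) (auto simp: line_cells_def)

lemma finite_cells_between: "finite g \<Longrightarrow> finite (cells_between a b g)"
  unfolding cells_between_def using finite_line_cells by auto

lemma cell_mid_between_iff:
  assumes c: "c \<in> line_cells g" and a: "a \<in> g" and b: "b \<in> g"
  shows "(a \<le> cell_mid c \<and> cell_mid c \<le> b) \<longleftrightarrow> (a \<le> fst c \<and> snd c \<le> b)"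
proof -
  obtain u v where uv: "c = (u, v)" by (cases c)
  have u: "u \<le> v" and nb: "\<And>w. w \<in> g \<Longrightarrow> \<not> (u < w \<and> w < v)"
    using c uv by (auto simp: line_cells_def)
  have "a \<le> (u + v) / 2 \<longleftrightarrow> a \<le> u" using nb[OF a] u by (cases "u < v") auto
  moreover have "(u + v) / 2 \<le> b \<longleftrightarrow> v \<le> b" using nb[OF b] u by (cases "u < v") auto
  ultimately show ?thesis by (simp add: uv cell_mid_def)
qed

lemma cells_between_same: "a \<in> g \<Longrightarrow> cells_between a a g = {(a, a)}"
  by (auto simp: cells_between_def line_cells_def)

lemma cells_between_last:
  assumes g: "finite g" and a: "a \<in> g" and b: "b \<in> g" and ab: "a < b"
  defines "b' \<equiv> Max {w \<in> g. a \<le> w \<and> w < b}"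
  shows "b' \<in> g" "a \<le> b'" "b' < b"
    "cells_between a b g = insert (b', b) (insert (b, b) (cells_between a b' g))"
    "(b', b) \<notin> insert (b, b) (cells_between a b' g)" "(b, b) \<notin> cells_between a b' g"
proof -
  have fin: "finite {w \<in> g. a \<le> w \<and> w < b}" using g by auto
  have ne: "{w \<in> g. a \<le> w \<and> w < b} \<noteq> {}" using a ab by auto
  have bm: "b' \<in> {w \<in> g. a \<le> w \<and> w < b}" unfolding b'_def using Max_in[OF fin ne] .
  have bmax: "\<And>w. w \<in> g \<Longrightarrow> a \<le> w \<Longrightarrow> w < b \<Longrightarrow> w \<le> b'"
    unfolding b'_def using fin by (auto intro: Max_ge)
  show b': "b' \<in> g" "a \<le> b'" "b' < b" using bm by auto
  show "(b', b) \<notin> insert (b, b) (cells_between a b' g)" "(b, b) \<notin> cells_between a b' g"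
    using b' by (auto simp: cells_between_def)
  show "cells_between a b g = insert (b', b) (insert (b, b) (cells_between a b' g))"
  proof (intro set_eqI iffI)
    fix c assume c: "c \<in> cells_between a b g"
    obtain u v where uv: "c = (u, v)" by (cases c)
    have cu: "u \<in> g" "v \<in> g" "u \<le> v" "a \<le> u" "v \<le> b"
      and nb: "\<And>w. w \<in> g \<Longrightarrow> \<not> (u < w \<and> w < v)"
      using c uv by (auto simp: cells_between_def line_cells_def)
    show "c \<in> insert (b', b) (insert (b, b) (cells_between a b' g))"
    proof (cases "v \<le> b'")
      case True
      then show ?thesis using c uv by (auto simp: cells_between_def)
    next
      case False
      then have "v = b" using bmax[OF cu(2)] cu by force
      moreover have "u = b' \<or> u = b"
      proof -
        have "b' \<le> u" using nb[OF b'(1)] False \<open>v = b\<close> by auto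
        moreover have "u < b \<Longrightarrow> u \<le> b'" using bmax[OF cu(1)] cu by auto
        ultimately show ?thesis using cu \<open>v = b\<close> by force
      qed
      ultimately show ?thesis using uv by auto
    qed
  next
    fix c assume "c \<in> insert (b', b) (insert (b, b) (cells_between a b' g))"
    moreover have "(b', b) \<in> line_cells g" using b' b bmax by (force simp: line_cells_def)
    moreover have "(b, b) \<in> line_cells g" using b by (auto simp: line_cells_def)
    ultimately show "c \<in> cells_between a b g" using b' by (auto simp: cells_between_def)
  qed
qed

lemma cells_between_euler_length:
  assumes g: "finite g" and a: "a \<in> g" and b: "b \<in> g" and ab: "a \<le> b"
  shows "(\<Sum>c\<in>cells_between a b g. if fst c < snd c then -1 else 1::real) = 1"
    and "(\<Sum>c\<in>cells_between a b g. if fst c < snd c then snd c - fst c else 0::real) = b - a"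
proof -
  have "(\<Sum>c\<in>cells_between a b g. if fst c < snd c then -1 else 1::real) = 1 \<and>
        (\<Sum>c\<in>cells_between a b g. if fst c < snd c then snd c - fst c else 0::real) = b - a"
    using b ab
  proof (induction "card {w \<in> g. a < w \<and> w \<le> b}" arbitrary: b rule: less_induct)
    case (less b)
    show ?case
    proof (cases "a = b")
      case True
      then show ?thesis using cells_between_same[OF a] by simp
    next
      case False
      then have ab': "a < b" using less by auto
      define b' where "b' = Max {w \<in> g. a \<le> w \<and> w < b}"
      note last = cells_between_last[OF g a less(2) ab', folded b'_def]
      have "{w \<in> g. a < w \<and> w \<le> b'} \<subseteq> {w \<in> g. a < w \<and> w \<le> b}"
        and "b \<in> {w \<in> g. a < w \<and> w \<le> b} - {w \<in> g. a < w \<and> w \<le> b'}"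
        using last(3) less(2) ab' by auto
      then have "{w \<in> g. a < w \<and> w \<le> b'} \<subset> {w \<in> g. a < w \<and> w \<le> b}" by blast
      then have "card {w \<in> g. a < w \<and> w \<le> b'} < card {w \<in> g. a < w \<and> w \<le> b}"
        using g by (simp add: psubset_card_mono)
      from less(1)[OF this last(1,2)] last(3,5,6) show ?thesis
        unfolding last(4) using finite_cells_between[OF g] by simp
    qed
  qed
  then show "(\<Sum>c\<in>cells_between a b g. if fst c < snd c then -1 else 1::real) = 1"
    and "(\<Sum>c\<in>cells_between a b g. if fst c < snd c then snd c - fst c else 0::real) = b - a"
    by auto
qed

text \<open>In the weight of a cell, the
  directions in \<open>S\<close> contribute edge lengths (vertices contribute \<open>0\<close>) and the other directions
  the Euler characteristic \<open>+1\<close> of a vertex or \<open>-1\<close> of an open edge, so that the weights of the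
  cells of a box add up to its \<open>k\<close>-th intrinsic volume.\<close>

definition cell_factor :: "'n set \<Rightarrow> 'n \<Rightarrow> real \<times> real \<Rightarrow> real" where
  "cell_factor S j c = (if j \<in> S then (if fst c < snd c then snd c - fst c else 0)
                        else (if fst c < snd c then -1 else 1))"

definition cell_weight :: "nat \<Rightarrow> ('n::finite \<Rightarrow> real \<times> real) \<Rightarrow> real" where
  "cell_weight k c = (\<Sum>S\<in>{S::'n set. card S = k}. \<Prod>j\<in>UNIV. cell_factor S j (c j))"

definition grid_cells :: "('n::finite \<Rightarrow> real set) \<Rightarrow> ('n \<Rightarrow> real \<times> real) set" where
  "grid_cells G = PiE UNIV (\<lambda>j. line_cells (G j))"

definition grid_cell_mid :: "('n::finite \<Rightarrow> real \<times> real) \<Rightarrow> real^'n" where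
  "grid_cell_mid c = (\<chi> j. cell_mid (c j))"

definition cell_valuation :: "nat \<Rightarrow> ('n::finite \<Rightarrow> real set) \<Rightarrow> (real^'n) set \<Rightarrow> real" where
  "cell_valuation k G A = (\<Sum>c\<in>grid_cells G. indicator A (grid_cell_mid c) * cell_weight k c)"

definition grid_box :: "('n::finite \<Rightarrow> real set) \<Rightarrow> (real^'n) set \<Rightarrow> bool" where
  "grid_box G X \<longleftrightarrow> (\<exists>a b. a \<le> b \<and> X = cbox a b \<and> (\<forall>j. a$j \<in> G j \<and> b$j \<in> G j))"

lemma finite_grid_cells: "(\<And>j. finite (G j)) \<Longrightarrow> finite (grid_cells G)"
  unfolding grid_cells_def by (intro finite_PiE) (auto intro: finite_line_cells)

lemma image_component_cbox:
  fixes a b :: "real^'n"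
  assumes "a \<le> b"
  shows "(\<lambda>x. x$j) ` cbox a b = {a$j..b$j}"
proof (intro set_eqI iffI)
  fix t assume "t \<in> (\<lambda>x. x$j) ` cbox a b"
  then show "t \<in> {a$j..b$j}" by (auto simp: mem_box_cart)
next
  fix t assume t: "t \<in> {a$j..b$j}"
  define x where "x = (\<chi> l. if l = j then t else a$l)"
  have "x \<in> cbox a b" using t assms by (auto simp: mem_box_cart x_def less_eq_vec_def)
  moreover have "x$j = t" by (simp add: x_def)
  ultimately show "t \<in> (\<lambda>x. x$j) ` cbox a b" by force
qed

lemma box_V_cbox:
  fixes a b :: "real^'n::finite"
  assumes "a \<le> b"
  shows "box_V k (cbox a b) = (\<Sum>S\<in>{S::'n set. card S = k}. \<Prod>j\<in>S. b$j - a$j)"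
proof -
  have "cbox a b \<noteq> {}" using assms by (auto simp: interval_ne_empty_cart less_eq_vec_def)
  moreover have "a$j \<le> b$j" for j using assms by (simp add: less_eq_vec_def)
  ultimately show ?thesis by (simp add: box_V_def image_component_cbox[OF assms])
qed

lemma box_V_empty [simp]: "box_V k {} = 0"
  by (simp add: box_V_def)

lemma grid_cell_mid_in_cbox_iff:
  assumes c: "c \<in> grid_cells G" and ag: "\<And>j. a$j \<in> G j" and bg: "\<And>j. b$j \<in> G j"
  shows "grid_cell_mid c \<in> cbox a b \<longleftrightarrow> c \<in> PiE UNIV (\<lambda>j. cells_between (a$j) (b$j) (G j))"
proof -
  have cj: "c j \<in> line_cells (G j)" for j using c by (auto simp: grid_cells_def PiE_iff)
  have "grid_cell_mid c \<in> cbox a b \<longleftrightarrow> (\<forall>j. a$j \<le> fst (c j) \<and> snd (c j) \<le> b$j)"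
    unfolding mem_box_cart grid_cell_mid_def using cell_mid_between_iff[OF cj ag bg] by simp
  also have "\<dots> \<longleftrightarrow> c \<in> PiE UNIV (\<lambda>j. cells_between (a$j) (b$j) (G j))"
    using c cj by (auto simp: cells_between_def PiE_iff grid_cells_def)
  finally show ?thesis .
qed

lemma cell_valuation_grid_box:
  fixes G :: "'n::finite \<Rightarrow> real set"
  assumes G: "\<And>j. finite (G j)" and X: "grid_box G X"
  shows "cell_valuation k G X = box_V k X"
proof -
  obtain a b where ab: "a \<le> b" "X = cbox a b" and ag: "\<And>j. a$j \<in> G j" and bg: "\<And>j. b$j \<in> G j"
    using X unfolding grid_box_def by blast
  define P where "P = PiE UNIV (\<lambda>j. cells_between (a$j) (b$j) (G j))"
  have P: "P \<subseteq> grid_cells G" unfolding P_def grid_cells_def cells_between_def by (auto simp: PiE_iff)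
  have "cell_valuation k G X = (\<Sum>c\<in>grid_cells G. if c \<in> P then cell_weight k c else 0)"
    unfolding cell_valuation_def ab(2) P_def
    by (intro sum.cong refl) (simp add: grid_cell_mid_in_cbox_iff[OF _ ag bg])
  also have "\<dots> = (\<Sum>c\<in>P. cell_weight k c)"
    using P by (simp add: sum.inter_restrict[OF finite_grid_cells[OF G], symmetric] Int_absorb1)
  also have "\<dots> = (\<Sum>S\<in>{S::'n set. card S = k}. \<Prod>j\<in>UNIV. \<Sum>y\<in>cells_between (a$j) (b$j) (G j). cell_factor S j y)"
    unfolding cell_weight_def P_def
    by (subst sum.swap) (auto intro!: sum.cong prod_sum_PiE[symmetric] finite_cells_between G)
  also have "\<dots> = (\<Sum>S\<in>{S::'n set. card S = k}. \<Prod>j\<in>UNIV. if j \<in> S then b$j - a$j else 1)"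
    using cells_between_euler_length[OF G ag bg] ab(1)
    by (intro sum.cong prod.cong refl) (simp add: cell_factor_def less_eq_vec_def)
  also have "\<dots> = box_V k X"
    unfolding ab(2) box_V_cbox[OF ab(1)] by (simp add: prod.If_cases)
  finally show ?thesis .
qed

lemma cell_valuation_empty [simp]: "cell_valuation k G {} = 0"
  by (simp add: cell_valuation_def)

lemma cell_valuation_Un:
  "disjnt S T \<Longrightarrow> cell_valuation k G (S \<union> T) = cell_valuation k G S + cell_valuation k G T"
  unfolding cell_valuation_def
  by (simp add: indicator_disj_union disjnt_def distrib_right sum.distrib)

lemma cell_valuation_UN_incl_excl:
  assumes "finite J"
  shows "cell_valuation k G (\<Union>(A ` J)) =
    (\<Sum>T | T \<subseteq> J \<and> T \<noteq> {}. (- 1) ^ (card T + 1) * cell_valuation k G (\<Inter>(A ` T)))"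
  by (rule Incl_Excl_UN) (use assms cell_valuation_Un in auto)

lemma grid_box_Int:
  assumes "grid_box G X" "grid_box G Y"
  shows "X \<inter> Y = {} \<or> grid_box G (X \<inter> Y)"
proof -
  obtain a b where X: "a \<le> b" "X = cbox a b" "\<forall>j. a$j \<in> G j \<and> b$j \<in> G j"
    using assms(1) grid_box_def by blast
  obtain c d where Y: "c \<le> d" "Y = cbox c d" "\<forall>j. c$j \<in> G j \<and> d$j \<in> G j"
    using assms(2) grid_box_def by blast
  define e where "e = (\<chi> i. max (a$i) (c$i))"
  define f where "f = (\<chi> i. min (b$i) (d$i))"
  have XY: "X \<inter> Y = cbox e f"
    unfolding X Y e_def f_def Int_interval_cart interval_cbox_cart ..
  show ?thesis
  proof (cases "e \<le> f")
    case True
    have "\<forall>j. e$j \<in> G j \<and> f$j \<in> G j" using X(3) Y(3) by (auto simp: e_def f_def max_def min_def)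
    then show ?thesis using True XY by (auto simp: grid_box_def)
  next
    case False
    then show ?thesis using XY by (auto simp: interval_eq_empty_cart less_eq_vec_def not_le)
  qed
qed

lemma grid_box_Inter:
  assumes "finite S" "S \<noteq> {}" "\<forall>X\<in>S. grid_box G X"
  shows "\<Inter>S = {} \<or> grid_box G (\<Inter>S)"
  using assms
proof (induction S rule: finite_ne_induct)
  case (insert X S)
  then show ?case using grid_box_Int[of G X "\<Inter>S"] by auto
qed simp

lemma grid_box_is_box: "grid_box G X \<Longrightarrow> is_box X"
  unfolding grid_box_def is_box_def by blast

text \<open>The expression inside the definition of \<^const>\<open>intrinsic_volume\<close>.\<close>

definition box_incl_excl :: "nat \<Rightarrow> (real^'n::finite) set set \<Rightarrow> real" where
  "box_incl_excl k B = (\<Sum>S\<in>{S. S \<subseteq> B \<and> S \<noteq> {}}. (-1) ^ (card S + 1) * box_V k (\<Inter>S))"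

lemma box_incl_excl_eq_cell_valuation:
  assumes G: "\<And>j. finite (G j)" and B: "finite B" "\<forall>X\<in>B. grid_box G X"
  shows "box_incl_excl k B = cell_valuation k G (\<Union>B)"
proof -
  have "cell_valuation k G (\<Union>(id ` B)) =
      (\<Sum>T | T \<subseteq> B \<and> T \<noteq> {}. (- 1) ^ (card T + 1) * cell_valuation k G (\<Inter>(id ` T)))"
    by (rule cell_valuation_UN_incl_excl[OF B(1)])
  also have "\<dots> = box_incl_excl k B"
    unfolding box_incl_excl_def
  proof (intro sum.cong refl)
    fix T assume T: "T \<in> {T. T \<subseteq> B \<and> T \<noteq> {}}"
    then have "\<Inter>T = {} \<or> grid_box G (\<Inter>T)"
      using grid_box_Inter[of T G] B finite_subset by auto
    then have "cell_valuation k G (\<Inter>T) = box_V k (\<Inter>T)"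
      using cell_valuation_grid_box[OF G] by auto
    then show "(- 1) ^ (card T + 1) * cell_valuation k G (\<Inter>(id ` T)) =
        (-1) ^ (card T + 1) * box_V k (\<Inter>T)"
      by simp
  qed
  finally show ?thesis by simp
qed

definition box_breakpoints :: "(real^'n::finite) set set \<Rightarrow> 'n \<Rightarrow> real set" where
  "box_breakpoints B j = (\<lambda>X. Inf ((\<lambda>x. x$j) ` X)) ` B \<union> (\<lambda>X. Sup ((\<lambda>x. x$j) ` X)) ` B"

lemma finite_box_breakpoints: "finite B \<Longrightarrow> finite (box_breakpoints B j)"
  by (simp add: box_breakpoints_def)

lemma is_box_imp_grid_box:
  assumes "is_box X" "X \<in> B" "\<And>j. box_breakpoints B j \<subseteq> G j"
  shows "grid_box G X"
proof -
  obtain a b where ab: "a \<le> b" "X = cbox a b" using assms(1) is_box_def by blast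
  have "a$j \<le> b$j" for j using ab by (simp add: less_eq_vec_def)
  then have "Inf ((\<lambda>x. x$j) ` X) = a$j" "Sup ((\<lambda>x. x$j) ` X) = b$j" for j
    by (simp_all add: ab(2) image_component_cbox[OF ab(1)])
  then have "a$j \<in> box_breakpoints B j \<and> b$j \<in> box_breakpoints B j" for j
    unfolding box_breakpoints_def using assms(2) by (metis UnI1 UnI2 rev_image_eqI)
  then show ?thesis unfolding grid_box_def using ab assms(3) by blast
qed

text \<open>This is where the choice in \<^const>\<open>intrinsic_volume\<close> is shown to be harmless: two
  representations of the same set by boxes are both evaluated by the cell valuation of a
  common grid.\<close>

lemma intrinsic_volume_eq_box_incl_excl:
  assumes B: "finite B" "\<forall>X\<in>B. is_box X"
  shows "intrinsic_volume k (\<Union>B) = box_incl_excl k B"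
proof -
  define P where "P = (\<lambda>v. \<exists>B'. finite B' \<and> (\<forall>X\<in>B'. is_box X) \<and> \<Union>B = \<Union>B' \<and>
      v = (\<Sum>S\<in>{S. S \<subseteq> B' \<and> S \<noteq> {}}. (-1) ^ (card S + 1) * box_V k (\<Inter>S)))"
  have "P (box_incl_excl k B)" unfolding P_def box_incl_excl_def using B by blast
  then have "P (SOME v. P v)" by (rule someI)
  then obtain B' where B': "finite B'" "\<forall>X\<in>B'. is_box X" "\<Union>B = \<Union>B'"
    and v: "(SOME v. P v) = box_incl_excl k B'"
    unfolding P_def box_incl_excl_def by blast
  define G where "G = (\<lambda>j. box_breakpoints B j \<union> box_breakpoints B' j)"
  have G: "\<And>j. finite (G j)" unfolding G_def using B(1) B'(1) by (simp add: finite_box_breakpoints)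
  have gB: "\<forall>X\<in>B. grid_box G X" and gB': "\<forall>X\<in>B'. grid_box G X"
    using B(2) B'(2) is_box_imp_grid_box[of _ B G] is_box_imp_grid_box[of _ B' G]
    by (auto simp: G_def)
  have "box_incl_excl k B = cell_valuation k G (\<Union>B')"
    using box_incl_excl_eq_cell_valuation[of G, OF G B(1) gB] B'(3) by simp
  also have "\<dots> = box_incl_excl k B'"
    using box_incl_excl_eq_cell_valuation[of G, OF G B'(1) gB'] by simp
  finally have "box_incl_excl k B = box_incl_excl k B'" .
  then show ?thesis using v unfolding intrinsic_volume_def P_def by simp
qed

lemma intrinsic_volume_empty [simp]: "intrinsic_volume k ({} :: (real^'n::finite) set) = 0"
  using intrinsic_volume_eq_box_incl_excl[of "{}" k] by (simp add: box_incl_excl_def)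

definition grid_polybox :: "('n::finite \<Rightarrow> real set) \<Rightarrow> (real^'n) set \<Rightarrow> bool" where
  "grid_polybox G A \<longleftrightarrow> (\<exists>B. finite B \<and> (\<forall>X\<in>B. grid_box G X) \<and> A = \<Union>B)"

lemma intrinsic_volume_eq_cell_valuation:
  assumes G: "\<And>j. finite (G j)" and A: "grid_polybox G A"
  shows "intrinsic_volume k A = cell_valuation k G A"
proof -
  obtain B where B: "finite B" "\<forall>X\<in>B. grid_box G X" "A = \<Union>B"
    using A unfolding grid_polybox_def by blast
  moreover have "\<forall>X\<in>B. is_box X" using B(2) grid_box_is_box by blast
  ultimately show ?thesis
    using intrinsic_volume_eq_box_incl_excl[OF B(1)] box_incl_excl_eq_cell_valuation[of G, OF G B(1,2)]
    by simp
qed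

lemma grid_polybox_empty: "grid_polybox G {}"
  unfolding grid_polybox_def by (rule exI[of _ "{}"]) simp

lemma grid_polybox_grid_box: "grid_box G X \<Longrightarrow> grid_polybox G X"
  unfolding grid_polybox_def by (rule exI[of _ "{X}"]) simp

lemma grid_polybox_Un: "grid_polybox G A \<Longrightarrow> grid_polybox G A' \<Longrightarrow> grid_polybox G (A \<union> A')"
  unfolding grid_polybox_def by (metis Union_Un_distrib Un_iff finite_UnI)

lemma grid_polybox_UN:
  "finite J \<Longrightarrow> (\<And>j. j \<in> J \<Longrightarrow> grid_polybox G (A j)) \<Longrightarrow> grid_polybox G (\<Union>(A ` J))"
  by (induction J rule: finite_induct) (auto intro: grid_polybox_Un grid_polybox_empty)

lemma grid_polybox_Int:
  assumes "grid_polybox G A" "grid_polybox G A'"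
  shows "grid_polybox G (A \<inter> A')"
proof -
  obtain B where B: "finite B" "\<forall>X\<in>B. grid_box G X" "A = \<Union>B"
    using assms(1) unfolding grid_polybox_def by blast
  obtain B' where B': "finite B'" "\<forall>X\<in>B'. grid_box G X" "A' = \<Union>B'"
    using assms(2) unfolding grid_polybox_def by blast
  have "A \<inter> A' = (\<Union>(X, Y)\<in>B \<times> B'. X \<inter> Y)" using B(3) B'(3) by blast
  also have "grid_polybox G \<dots>"
  proof (rule grid_polybox_UN)
    show "finite (B \<times> B')" using B(1) B'(1) by simp
    fix XY assume "XY \<in> B \<times> B'"
    then obtain X Y where "XY = (X, Y)" "grid_box G X" "grid_box G Y" using B(2) B'(2) by blast
    then show "grid_polybox G (case XY of (X, Y) \<Rightarrow> X \<inter> Y)"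
      using grid_box_Int[of G X Y] grid_polybox_empty grid_polybox_grid_box by auto
  qed
  finally show ?thesis .
qed

lemma grid_polybox_INT:
  "finite T \<Longrightarrow> T \<noteq> {} \<Longrightarrow> (\<And>j. j \<in> T \<Longrightarrow> grid_polybox G (A j)) \<Longrightarrow> grid_polybox G (\<Inter>(A ` T))"
  by (induction T rule: finite_ne_induct) (auto intro: grid_polybox_Int)

lemma intrinsic_volume_UN_incl_excl:
  assumes G: "\<And>j. finite (G j)" and J: "finite J" and A: "\<And>j. j \<in> J \<Longrightarrow> grid_polybox G (A j)"
  shows "intrinsic_volume k (\<Union>(A ` J)) =
    (\<Sum>T | T \<subseteq> J \<and> T \<noteq> {}. (- 1) ^ (card T + 1) * intrinsic_volume k (\<Inter>(A ` T)))"
proof -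
  have "grid_polybox G (\<Inter>(A ` T))" if "T \<in> {T. T \<subseteq> J \<and> T \<noteq> {}}" for T
    using that J A by (intro grid_polybox_INT) (auto intro: finite_subset)
  then have "(\<Sum>T | T \<subseteq> J \<and> T \<noteq> {}. (- 1) ^ (card T + 1) * cell_valuation k G (\<Inter>(A ` T))) =
      (\<Sum>T | T \<subseteq> J \<and> T \<noteq> {}. (- 1) ^ (card T + 1) * intrinsic_volume k (\<Inter>(A ` T)))"
    using intrinsic_volume_eq_cell_valuation[of G, OF G] by (intro sum.cong) auto
  moreover have "intrinsic_volume k (\<Union>(A ` J)) = cell_valuation k G (\<Union>(A ` J))"
    using intrinsic_volume_eq_cell_valuation[of G, OF G grid_polybox_UN[OF J A]] .
  ultimately show ?thesis using cell_valuation_UN_incl_excl[OF J, of k G A] by simp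
qed

lemma image_scaleR_translate_cbox:
  fixes a b t :: "real^'n::finite"
  assumes "c > 0" "a \<le> b"
  shows "(\<lambda>x. c *\<^sub>R x + t) ` cbox a b = cbox (c *\<^sub>R a + t) (c *\<^sub>R b + t)"
    and "c *\<^sub>R a + t \<le> c *\<^sub>R b + t"
proof -
  have "cbox a b \<noteq> {}" using assms by (auto simp: interval_ne_empty_cart less_eq_vec_def)
  then show "(\<lambda>x. c *\<^sub>R x + t) ` cbox a b = cbox (c *\<^sub>R a + t) (c *\<^sub>R b + t)"
    using assms by (simp add: image_affinity_cbox)
  show "c *\<^sub>R a + t \<le> c *\<^sub>R b + t" using assms by (auto simp: less_eq_vec_def)
qed

lemma is_box_image_scaleR_translate:
  fixes t :: "real^'n::finite"
  assumes "c > 0" "is_box X"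
  shows "is_box ((\<lambda>x. c *\<^sub>R x + t) ` X)"
  using assms image_scaleR_translate_cbox[OF assms(1)] unfolding is_box_def by metis

lemma box_V_scaleR_translate:
  fixes t :: "real^'n::finite"
  assumes c: "c > 0" and Y: "Y = {} \<or> is_box Y"
  shows "box_V k ((\<lambda>x. c *\<^sub>R x + t) ` Y) = c ^ k * box_V k Y"
proof (cases "Y = {}")
  case False
  then obtain a b where ab: "a \<le> b" "Y = cbox a b" using Y is_box_def by blast
  note image = image_scaleR_translate_cbox[OF c ab(1), of t]
  have "box_V k ((\<lambda>x. c *\<^sub>R x + t) ` Y) =
      (\<Sum>S\<in>{S::'n set. card S = k}. \<Prod>j\<in>S. c * (b$j - a$j))"
    unfolding ab(2) image(1) box_V_cbox[OF image(2)] by (simp add: algebra_simps)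
  also have "\<dots> = c ^ k * box_V k Y"
    unfolding ab(2) box_V_cbox[OF ab(1)] by (simp add: prod.distrib sum_distrib_left)
  finally show ?thesis .
qed simp

lemma intrinsic_volume_scaleR_translate:
  fixes t :: "real^'n::finite"
  assumes c: "c > 0" and B: "finite B" "\<forall>X\<in>B. is_box X"
  shows "intrinsic_volume k ((\<lambda>x. c *\<^sub>R x + t) ` \<Union>B) = c ^ k * intrinsic_volume k (\<Union>B)"
proof -
  define h where "h = (\<lambda>x::real^'n. c *\<^sub>R x + t)"
  have inj_h: "inj h" unfolding h_def inj_def using c by simp
  then have inj_image: "inj_on (image h) A" for A by (simp add: inj_on_def inj_image_eq_iff)
  have inj_image2: "inj_on (image (image h)) A" for A
    using inj_on_image_eq_iff[OF inj_image[of UNIV]] by (simp add: inj_on_def)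
  define hB where "hB = image h ` B"
  have hB: "finite hB" "\<forall>X\<in>hB. is_box X"
    using B is_box_image_scaleR_translate[OF c] unfolding hB_def h_def by auto
  have subsets: "{S. S \<subseteq> hB \<and> S \<noteq> {}} = image (image h) ` {S. S \<subseteq> B \<and> S \<noteq> {}}"
    unfolding hB_def by (auto simp: subset_image_iff)
  have "box_V k (\<Inter>(image h ` S)) = c ^ k * box_V k (\<Inter>S)" if S: "S \<subseteq> B" "S \<noteq> {}" for S
  proof -
    have "\<forall>X\<in>S. grid_box (box_breakpoints B) X" using S B(2) is_box_imp_grid_box[of _ B] by blast
    then have "\<Inter>S = {} \<or> is_box (\<Inter>S)"
      using grid_box_Inter[of S] grid_box_is_box S B(1) finite_subset by metis
    moreover have "\<Inter>(image h ` S) = h ` \<Inter>S" using image_INT[of h UNIV S "\<lambda>x. x"] inj_h S by auto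
    ultimately show ?thesis unfolding h_def by (simp add: box_V_scaleR_translate[OF c])
  qed
  then have "box_incl_excl k hB = c ^ k * box_incl_excl k B"
    unfolding box_incl_excl_def subsets
    by (subst sum.reindex[OF inj_image2])
      (auto simp: card_image[OF inj_image] sum_distrib_left mult.left_commute)
  moreover have "h ` \<Union>B = \<Union>hB" by (auto simp: hB_def)
  ultimately show ?thesis
    using intrinsic_volume_eq_box_incl_excl[OF hB] intrinsic_volume_eq_box_incl_excl[OF B]
    unfolding h_def by simp
qed

lemma card_line_cells_le: "finite g \<Longrightarrow> card (line_cells g) \<le> 2 * card g"
proof -
  assume g: "finite g"
  have "inj_on (\<lambda>c. (fst c, fst c < snd c)) (line_cells g)"
  proof (rule inj_onI)
    fix c c' assume c: "c \<in> line_cells g" "c' \<in> line_cells g"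
      and eq: "(fst c, fst c < snd c) = (fst c', fst c' < snd c')"
    obtain u v u' v' where uv: "c = (u, v)" "c' = (u', v')" by (cases c, cases c')
    have "v = v'" using c eq unfolding uv line_cells_def by simp (smt (verit))
    then show "c = c'" using eq uv by simp
  qed
  then have "card (line_cells g) = card ((\<lambda>c. (fst c, fst c < snd c)) ` line_cells g)"
    by (simp add: card_image)
  also have "\<dots> \<le> card (g \<times> (UNIV :: bool set))"
    by (rule card_mono) (auto simp: g line_cells_def)
  also have "\<dots> = 2 * card g" by (simp add: card_cartesian_product g)
  finally show ?thesis .
qed

lemma inj_on_cell_mid: "inj_on cell_mid (line_cells g)"
proof (rule inj_onI)
  fix c c' assume c: "c \<in> line_cells g" "c' \<in> line_cells g" and eq: "cell_mid c = cell_mid c'"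
  obtain u v u' v' where uv: "c = (u, v)" "c' = (u', v')" by (cases c, cases c')
  have "u = u'" using c eq unfolding uv line_cells_def cell_mid_def by simp (smt (verit))
  then show "c = c'" using eq uv by (simp add: cell_mid_def)
qed

lemma abs_cell_weight_le:
  fixes c :: "'n::finite \<Rightarrow> real \<times> real" and \<delta> :: real
  assumes c: "c \<in> grid_cells G" and \<delta>: "0 \<le> \<delta>"
    and len: "\<And>j c1. c1 \<in> line_cells (G j) \<Longrightarrow> snd c1 - fst c1 \<le> \<delta>"
  shows "\<bar>cell_weight k c\<bar> \<le> card {S::'n set. card S = k} * \<delta> ^ k"
proof -
  have "\<bar>\<Prod>j\<in>UNIV. cell_factor S j (c j)\<bar> \<le> \<delta> ^ k" if S: "card S = k" for S :: "'n set"
  proof -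
    have "\<bar>\<Prod>j\<in>UNIV. cell_factor S j (c j)\<bar> \<le> (\<Prod>j\<in>UNIV. if j \<in> S then \<delta> else 1)"
      unfolding abs_prod
    proof (rule prod_mono)
      fix j
      have "c j \<in> line_cells (G j)" using c by (auto simp: grid_cells_def PiE_iff)
      then show "0 \<le> \<bar>cell_factor S j (c j)\<bar> \<and> \<bar>cell_factor S j (c j)\<bar> \<le> (if j \<in> S then \<delta> else 1)"
        using len \<delta> by (auto simp: cell_factor_def)
    qed
    then show ?thesis using S by (simp add: prod.If_cases Int_absorb1)
  qed
  then have "\<bar>cell_weight k c\<bar> \<le> (\<Sum>S\<in>{S::'n set. card S = k}. \<delta> ^ k)"
    unfolding cell_weight_def by (intro order.trans[OF sum_abs] sum_mono) simp
  then show ?thesis by simp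
qed

lemma card_grid_cells_mid_in_le:
  fixes G :: "'n::finite \<Rightarrow> real set"
  assumes G: "\<And>j. finite (G j)" and N: "\<And>j. card (G j) \<le> N" and P: "finite P"
  shows "card {c \<in> grid_cells G. cell_mid (c l) \<in> P} \<le> card P * (2 * N) ^ (CARD('n) - 1)"
proof -
  define F where "F = (\<lambda>j. if j = l then {c1 \<in> line_cells (G j). cell_mid c1 \<in> P} else line_cells (G j))"
  have "{c \<in> grid_cells G. cell_mid (c l) \<in> P} = PiE UNIV F"
    unfolding F_def grid_cells_def by (auto simp: PiE_iff split: if_splits)
  then have "card {c \<in> grid_cells G. cell_mid (c l) \<in> P} = card (F l) * (\<Prod>j\<in>UNIV - {l}. card (F j))"
    by (simp add: card_PiE prod.remove)
  also have "\<dots> \<le> card P * (\<Prod>j\<in>UNIV - {l}. 2 * N)"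
  proof (rule mult_mono)
    show "card (F l) \<le> card P"
      unfolding F_def using inj_on_cell_mid P by (auto intro!: card_inj_on_le intro: inj_on_subset)
    have "card (line_cells (G j)) \<le> 2 * N" for j
      using card_line_cells_le[OF G[of j]] N[of j] by linarith
    then show "(\<Prod>j\<in>UNIV - {l}. card (F j)) \<le> (\<Prod>j\<in>UNIV - {l}. 2 * N)"
      by (intro prod_mono) (simp add: F_def)
  qed simp_all
  also have "\<dots> = card P * (2 * N) ^ (CARD('n) - 1)"
    by (simp add: card_Diff_singleton)
  finally show ?thesis .
qed

text \<open>A union of grid boxes inside finitely many coordinate hyperplanes \<open>x$l \<in> P\<close> meets only
  cells whose centre lies on one of them; their number is of lower order than the number of all
  cells.\<close>

lemma abs_intrinsic_volume_le_hyperplanes: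
  fixes A :: "(real^'n::finite) set" and \<delta> :: real
  assumes G: "\<And>j. finite (G j)" and A: "grid_polybox G A" and AP: "A \<subseteq> {x. \<exists>l. x$l \<in> P}"
    and P: "finite P" and \<delta>: "0 \<le> \<delta>"
    and len: "\<And>j c1. c1 \<in> line_cells (G j) \<Longrightarrow> snd c1 - fst c1 \<le> \<delta>"
    and N: "\<And>j. card (G j) \<le> N"
  shows "\<bar>intrinsic_volume k A\<bar> \<le>
    card {S::'n set. card S = k} * \<delta> ^ k * (CARD('n) * card P * (2 * N) ^ (CARD('n) - 1))"
proof -
  define K where "K = card {S::'n set. card S = k} * \<delta> ^ k"
  define Q where "Q = (\<lambda>l. {c \<in> grid_cells G. cell_mid (c l) \<in> P})"
  have fin: "finite (grid_cells G)" using finite_grid_cells G by blast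
  have "\<bar>indicator A (grid_cell_mid c) * cell_weight k c\<bar> \<le> indicator (\<Union>l. Q l) c * K"
    if c: "c \<in> grid_cells G" for c
    using AP abs_cell_weight_le[OF c \<delta> len] \<delta>
    by (auto simp: indicator_def K_def Q_def grid_cell_mid_def c)
  then have "\<bar>intrinsic_volume k A\<bar> \<le> (\<Sum>c\<in>grid_cells G. indicator (\<Union>l. Q l) c * K)"
    unfolding intrinsic_volume_eq_cell_valuation[of G, OF G A] cell_valuation_def
    by (intro order.trans[OF sum_abs] sum_mono)
  also have "\<dots> = card (\<Union>l. Q l) * K"
  proof -
    have "(\<Union>l. Q l) \<subseteq> grid_cells G" by (auto simp: Q_def)
    then have "grid_cells G \<inter> (\<Union>l. Q l) = (\<Union>l. Q l)" by blast
    have "(\<Sum>c\<in>grid_cells G. indicator (\<Union>l. Q l) c * K) =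
        (\<Sum>c\<in>grid_cells G. if c \<in> (\<Union>l. Q l) then K else 0)"
      by (intro sum.cong) (auto simp: indicator_def)
    also have "\<dots> = (\<Sum>c\<in>grid_cells G \<inter> (\<Union>l. Q l). K)"
      by (rule sum.inter_restrict[OF fin, symmetric])
    finally show ?thesis using \<open>grid_cells G \<inter> (\<Union>l. Q l) = (\<Union>l. Q l)\<close> by simp
  qed
  also have "\<dots> \<le> (\<Sum>l\<in>UNIV. card (Q l)) * K"
    using card_UN_le[of UNIV Q] K_def \<delta> by (intro mult_right_mono) (simp_all flip: of_nat_sum)
  also have "\<dots> \<le> (\<Sum>l\<in>(UNIV::'n set). card P * (2 * N) ^ (CARD('n) - 1)) * K"
  proof -
    have "(\<Sum>l\<in>UNIV. card (Q l)) \<le> (\<Sum>l\<in>(UNIV::'n set). card P * (2 * N) ^ (CARD('n) - 1))"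
      unfolding Q_def by (intro sum_mono card_grid_cells_mid_in_le[where G=G, OF G N P])
    then have "real (\<Sum>l\<in>UNIV. card (Q l)) \<le> real (\<Sum>l\<in>(UNIV::'n set). card P * (2 * N) ^ (CARD('n) - 1))"
      by (rule of_nat_mono)
    moreover have "0 \<le> K" using \<delta> by (simp add: K_def)
    ultimately show ?thesis by (rule mult_right_mono)
  qed
  finally show ?thesis by (simp add: K_def mult_ac)
qed

section \<open>The grid of level-\<open>n\<close> cubes\<close>

definition unif_grid :: "nat \<Rightarrow> nat \<Rightarrow> real set" where
  "unif_grid M n = (\<lambda>i. real i / real M ^ n) ` {0..M^n}"

lemma finite_unif_grid: "finite (unif_grid M n)"
  by (simp add: unif_grid_def)

lemma card_unif_grid_le: "card (unif_grid M n) \<le> M^n + 1"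
  unfolding unif_grid_def using card_image_le[of "{0..M^n}" "\<lambda>i. real i / real M ^ n"] by simp

lemma line_cells_unif_grid_length_le:
  assumes M: "M \<ge> 1" and c: "c \<in> line_cells (unif_grid M n)"
  shows "snd c - fst c \<le> 1 / real M ^ n"
proof (rule ccontr)
  assume long: "\<not> ?thesis"
  obtain u v where uv: "c = (u, v)" by (cases c)
  have nb: "\<And>w. w \<in> unif_grid M n \<Longrightarrow> \<not> (u < w \<and> w < v)"
    using c uv by (auto simp: line_cells_def)
  have "u \<in> unif_grid M n" "v \<in> unif_grid M n" using c uv by (auto simp: line_cells_def)
  then obtain i i' where i: "u = real i / real M ^ n" and i': "i' \<in> {0..M^n}" "v = real i' / real M ^ n"
    unfolding unif_grid_def by (elim imageE) (rule that)
  have Mn: "real M ^ n > 0" using M by simp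
  have "1 / real M ^ n < (real i' - real i) / real M ^ n"
    using long uv i i'(2) by (simp add: diff_divide_distrib)
  then have "1 < real i' - real i" using M by (simp add: divide_less_cancel)
  then have "i + 1 < i'" by linarith
  then have "i + 1 \<in> {0..M^n}" using i'(1) by simp
  then have "real (i + 1) / real M ^ n \<in> unif_grid M n" unfolding unif_grid_def by (rule imageI)
  moreover have "u < real (i + 1) / real M ^ n" "real (i + 1) / real M ^ n < v"
    using \<open>i + 1 < i'\<close> i i'(2) Mn by (simp_all add: divide_strict_right_mono)
  ultimately show False using nb by blast
qed

lemma finite_grid_idx: "finite (grid_idx M n :: ('n::finite \<Rightarrow> nat) set)"
proof -
  have "grid_idx M n = PiE UNIV (\<lambda>_::'n. {..<M^n})" unfolding grid_idx_def by (auto simp: PiE_iff)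
  then show ?thesis by (simp add: finite_PiE)
qed

lemma card_grid_idx_1: "card (grid_idx M 1 :: ('n::finite \<Rightarrow> nat) set) = M ^ CARD('n)"
proof -
  have "grid_idx M 1 = PiE UNIV (\<lambda>_::'n. {..<M})" unfolding grid_idx_def by (auto simp: PiE_iff)
  then show ?thesis by (simp add: card_PiE)
qed

lemma grid_cube_grid_box:
  assumes M: "M \<ge> 1" and i: "i \<in> grid_idx M n"
  shows "grid_box (\<lambda>_. unif_grid M n) (grid_cube M n (i :: 'n::finite \<Rightarrow> nat))"
proof -
  have "i j < M^n" for j using i by (simp add: grid_idx_def)
  then have ij: "i j \<in> {0..M^n}" "i j + 1 \<in> {0..M^n}" for j by (simp_all add: less_imp_le Suc_le_eq)
  have "(\<chi> j. real (i j) / real M ^ n) $ j \<in> unif_grid M n"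
    and "(\<chi> j. real (i j + 1) / real M ^ n) $ j \<in> unif_grid M n" for j
    unfolding unif_grid_def vec_lambda_beta by (rule imageI, rule ij)+
  moreover have "(\<chi> j. real (i j) / real M ^ n) \<le> (\<chi> j. real (i j + 1) / real M ^ n)"
    using M by (simp add: less_eq_vec_def divide_right_mono)
  ultimately show ?thesis unfolding grid_box_def grid_cube_def by blast
qed

lemma grid_cube_is_box:
  assumes "M \<ge> 1"
  shows "is_box (grid_cube M n (i :: 'n::finite \<Rightarrow> nat))"
proof -
  have "(\<chi> j. real (i j) / real M ^ n) \<le> (\<chi> j. real (i j + 1) / real M ^ n)"
    using assms by (simp add: less_eq_vec_def divide_right_mono)
  then show ?thesis unfolding is_box_def grid_cube_def by blast
qed

lemma Cset_eq_UN: "Cset M X n = \<Union>(grid_cube M n ` {i \<in> grid_idx M n. \<not> kept M X n i})"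
  unfolding Cset_def by blast

lemma Cset_sub_eq_UN: "Cset_sub M X n jj =
   \<Union>(grid_cube M n ` {i \<in> grid_idx M n. grid_cube M n i \<subseteq> grid_cube M 1 jj \<and> \<not> kept M X n i})"
  unfolding Cset_sub_def by blast

lemma Cset_0: "Cset M X 0 = {}"
  unfolding Cset_def by simp

lemma Cset_sub_subset: "Cset_sub M X n jj \<subseteq> grid_cube M 1 jj"
  unfolding Cset_sub_def by blast

lemma grid_polybox_Cset_sub:
  assumes M: "M \<ge> 1"
  shows "grid_polybox (\<lambda>_. unif_grid M n) (Cset_sub M X n jj :: (real^'n::finite) set)"
  unfolding Cset_sub_eq_UN
  by (rule grid_polybox_UN)
    (use finite_grid_idx[of M n] grid_cube_grid_box[OF M] grid_polybox_grid_box in auto)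

lemma grid_coordinate_le_iff:
  assumes M: "M \<ge> 1"
  shows "real a / real M \<le> real b / real M ^ Suc m \<longleftrightarrow> a * M^m \<le> b"
    and "real b / real M ^ Suc m \<le> real a / real M \<longleftrightarrow> b \<le> a * M^m"
proof -
  have "real M > 0" "real M ^ m > 0" using M by auto
  then have "real a / real M \<le> real b / real M ^ Suc m \<longleftrightarrow> real a * real M ^ m \<le> real b"
    and "real b / real M ^ Suc m \<le> real a / real M \<longleftrightarrow> real b \<le> real a * real M ^ m"
    by (simp_all add: field_simps)
  then show "real a / real M \<le> real b / real M ^ Suc m \<longleftrightarrow> a * M^m \<le> b"
    and "real b / real M ^ Suc m \<le> real a / real M \<longleftrightarrow> b \<le> a * M^m"
    by (simp_all flip: of_nat_power of_nat_mult)
qed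

lemma nat_div_eq_iff: "0 < q \<Longrightarrow> a div q = b \<longleftrightarrow> b * q \<le> a \<and> a + 1 \<le> (b + 1) * q"
  for a b q :: nat
proof
  assume q: "0 < q" and ab: "a div q = b"
  have "a = b * q + a mod q" using div_mult_mod_eq[of a q] ab by simp
  moreover have "a mod q < q" using q by simp
  ultimately show "b * q \<le> a \<and> a + 1 \<le> (b + 1) * q" by (simp add: algebra_simps)
next
  assume "b * q \<le> a \<and> a + 1 \<le> (b + 1) * q"
  then show "a div q = b" by (intro div_nat_eqI) (auto simp: algebra_simps)
qed

lemma grid_cube_subset_grid_cube_1_iff:
  assumes M: "M \<ge> 1"
  shows "grid_cube M (Suc m) i \<subseteq> grid_cube M 1 (jj :: 'n::finite \<Rightarrow> nat) \<longleftrightarrow> (\<forall>l. i l div M^m = jj l)"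
proof -
  have "\<forall>l. (\<chi> j. real (i j) / real M ^ Suc m) $ l \<le> (\<chi> j. real (i j + 1) / real M ^ Suc m) $ l"
    using M by (simp add: divide_right_mono)
  then have "grid_cube M (Suc m) i \<subseteq> grid_cube M 1 jj \<longleftrightarrow>
     (\<forall>l. real (jj l) / real M \<le> real (i l) / real M ^ Suc m \<and>
          real (i l + 1) / real M ^ Suc m \<le> real (jj l + 1) / real M)"
    unfolding grid_cube_def subset_interval_cart(1) by simp
  also have "\<dots> \<longleftrightarrow> (\<forall>l. jj l * M^m \<le> i l \<and> i l + 1 \<le> (jj l + 1) * M^m)"
    by (simp only: grid_coordinate_le_iff[OF M])
  also have "\<dots> \<longleftrightarrow> (\<forall>l. i l div M^m = jj l)"
    using nat_div_eq_iff[of "M^m"] M by simp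
  finally show ?thesis .
qed

text \<open>Level-\<open>m\<close> index \<open>i\<close> inside the level-1 cube \<open>jj\<close>, as a level-\<open>m+1\<close> index, and the coins
  of the copy of the construction that lives in \<open>jj\<close>.\<close>

definition subcube_index :: "nat \<Rightarrow> ('n \<Rightarrow> nat) \<Rightarrow> nat \<Rightarrow> ('n \<Rightarrow> nat) \<Rightarrow> ('n \<Rightarrow> nat)" where
  "subcube_index M jj m i = (\<lambda>l. jj l * M^m + i l)"

definition subcube_coins ::
    "nat \<Rightarrow> (nat \<Rightarrow> ('n \<Rightarrow> nat) \<Rightarrow> bool) \<Rightarrow> ('n \<Rightarrow> nat) \<Rightarrow> nat \<Rightarrow> ('n \<Rightarrow> nat) \<Rightarrow> bool" where
  "subcube_coins M X jj m i = X (Suc m) (subcube_index M jj m i)"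

definition subcube_map :: "nat \<Rightarrow> ('n::finite \<Rightarrow> nat) \<Rightarrow> real^'n \<Rightarrow> real^'n" where
  "subcube_map M jj x = (1 / real M) *\<^sub>R x + (\<chi> l. real (jj l) / real M)"

lemma subcube_index_div_mod:
  "subcube_index M (\<lambda>l. i l div M^m) m (\<lambda>l. i l mod M^m) = i"
  unfolding subcube_index_def by (simp only: div_mult_mod_eq)

lemma kept_Suc_iff:
  assumes M: "M \<ge> 1"
  shows "kept M X (Suc m) i \<longleftrightarrow>
    X 1 (\<lambda>l. i l div M^m) \<and> kept M (subcube_coins M X (\<lambda>l. i l div M^m)) m (\<lambda>l. i l mod M^m)"
proof (induction m arbitrary: i)
  case (Suc m)
  have div: "(\<lambda>l. i l div M div M^m) = (\<lambda>l. i l div M^Suc m)" by (simp add: div_mult2_eq)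
  have mod: "(\<lambda>l. i l div M mod M^m) = (\<lambda>l. i l mod M^Suc m div M)"
  proof
    fix l
    have "i l mod (M * M^m) = M * (i l div M mod M^m) + i l mod M" by (rule mod_mult2_eq)
    then show "i l div M mod M^m = i l mod M^Suc m div M" using M by simp
  qed
  have "kept M X (Suc (Suc m)) i \<longleftrightarrow> kept M X (Suc m) (\<lambda>l. i l div M) \<and> X (Suc (Suc m)) i" by simp
  also have "\<dots> \<longleftrightarrow> (X 1 (\<lambda>l. i l div M div M^m) \<and>
      kept M (subcube_coins M X (\<lambda>l. i l div M div M^m)) m (\<lambda>l. i l div M mod M^m)) \<and>
      X (Suc (Suc m)) i"
    using Suc.IH[of "\<lambda>l. i l div M"] by simp
  also have "\<dots> \<longleftrightarrow> X 1 (\<lambda>l. i l div M^Suc m) \<and>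
      kept M (subcube_coins M X (\<lambda>l. i l div M^Suc m)) (Suc m) (\<lambda>l. i l mod M^Suc m)"
  proof -
    have "subcube_coins M X (\<lambda>l. i l div M^Suc m) (Suc m) (\<lambda>l. i l mod M^Suc m) = X (Suc (Suc m)) i"
      by (simp only: subcube_coins_def subcube_index_div_mod)
    then show ?thesis unfolding div mod by simp
  qed
  finally show ?case .
qed simp

lemma subcube_index_in_grid_idx:
  assumes jj: "jj \<in> grid_idx M 1" and i: "i \<in> grid_idx M m"
  shows "subcube_index M jj m i \<in> grid_idx M (Suc m)"
    and "\<And>l. subcube_index M jj m i l div M^m = jj l"
    and "\<And>l. subcube_index M jj m i l mod M^m = i l"
proof -
  have a: "jj l < M" "i l < M^m" for l using jj i by (auto simp: grid_idx_def)
  have "jj l * M^m + i l < M * M^m" for l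
  proof -
    have "jj l * M^m + i l < (jj l + 1) * M^m" using a[of l] by simp
    also have "\<dots> \<le> M * M^m" using a[of l] by (intro mult_right_mono) auto
    finally show ?thesis .
  qed
  then show "subcube_index M jj m i \<in> grid_idx M (Suc m)"
    by (simp add: grid_idx_def subcube_index_def)
  show "subcube_index M jj m i l div M^m = jj l" "subcube_index M jj m i l mod M^m = i l" for l
    using a[of l] by (simp_all add: subcube_index_def)
qed

lemma grid_cube_subcube_index:
  assumes M: "M \<ge> 1"
  shows "grid_cube M (Suc m) (subcube_index M jj m i) = subcube_map M (jj :: 'n::finite \<Rightarrow> nat) ` grid_cube M m i"
proof -
  have c: "1 / real M > 0" and Mm: "real M > 0" "real M ^ m > 0" using M by auto
  have "(\<chi> j. real (i j) / real M ^ m) \<le> (\<chi> j. real (i j + 1) / real M ^ m)"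
    using M by (simp add: less_eq_vec_def divide_right_mono)
  from image_scaleR_translate_cbox(1)[OF c this]
  have "subcube_map M jj ` grid_cube M m i =
      cbox ((1 / real M) *\<^sub>R (\<chi> j. real (i j) / real M ^ m) + (\<chi> l. real (jj l) / real M))
           ((1 / real M) *\<^sub>R (\<chi> j. real (i j + 1) / real M ^ m) + (\<chi> l. real (jj l) / real M))"
    unfolding subcube_map_def grid_cube_def .
  also have "\<dots> = grid_cube M (Suc m) (subcube_index M jj m i)"
    unfolding grid_cube_def subcube_index_def using Mm
    by (intro arg_cong2[where f=cbox]) (simp_all add: vec_eq_iff field_simps)
  finally show ?thesis by simp
qed

lemma Cset_sub_Suc_index_eq:
  fixes jj :: "'n::finite \<Rightarrow> nat"
  assumes M: "M \<ge> 1" and jj: "jj \<in> grid_idx M 1"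
  shows "{i \<in> grid_idx M (Suc m). grid_cube M (Suc m) i \<subseteq> grid_cube M 1 jj \<and> \<not> kept M X (Suc m) i} =
    subcube_index M jj m ` {i \<in> grid_idx M m. \<not> (X 1 jj \<and> kept M (subcube_coins M X jj) m i)}"
    (is "?L = subcube_index M jj m ` ?R")
proof (intro set_eqI iffI)
  fix i assume i: "i \<in> ?L"
  then have jj_div: "(\<lambda>l. i l div M^m) = jj"
    using grid_cube_subset_grid_cube_1_iff[OF M, of m i jj] by auto
  have "\<not> kept M X (Suc m) i" using i by blast
  then have "\<not> (X 1 jj \<and> kept M (subcube_coins M X jj) m (\<lambda>l. i l mod M^m))"
    unfolding kept_Suc_iff[OF M, of X m i] jj_div .
  moreover have "(\<lambda>l. i l mod M^m) \<in> grid_idx M m" using M by (simp add: grid_idx_def)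
  ultimately have "(\<lambda>l. i l mod M^m) \<in> ?R" by blast
  moreover have "i = subcube_index M jj m (\<lambda>l. i l mod M^m)"
    using subcube_index_div_mod[of M i m] by (simp add: jj_div)
  ultimately show "i \<in> subcube_index M jj m ` ?R" by blast
next
  fix i assume "i \<in> subcube_index M jj m ` ?R"
  then obtain i' where i': "i' \<in> grid_idx M m" "\<not> (X 1 jj \<and> kept M (subcube_coins M X jj) m i')"
    and i: "i = subcube_index M jj m i'"
    by blast
  note idx = subcube_index_in_grid_idx[OF jj i'(1)]
  have "(\<lambda>l. i l div M^m) = jj" "(\<lambda>l. i l mod M^m) = i'" using idx(2,3) i by auto
  then have "grid_cube M (Suc m) i \<subseteq> grid_cube M 1 jj" "\<not> kept M X (Suc m) i"
    using i'(2) grid_cube_subset_grid_cube_1_iff[OF M, of m i jj] unfolding kept_Suc_iff[OF M]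
    by auto
  then show "i \<in> ?L" using idx(1) i by blast
qed

lemma Cset_sub_Suc:
  assumes M: "M \<ge> 1" and jj: "jj \<in> grid_idx M 1"
  shows "Cset_sub M X (Suc m) (jj :: 'n::finite \<Rightarrow> nat) = subcube_map M jj `
     \<Union>(grid_cube M m ` {i \<in> grid_idx M m. \<not> (X 1 jj \<and> kept M (subcube_coins M X jj) m i)})"
  unfolding Cset_sub_eq_UN Cset_sub_Suc_index_eq[OF M jj]
  by (simp add: image_image image_UN grid_cube_subcube_index[OF M])

lemma exists_grid_interval:
  assumes M: "M \<ge> 1" and t: "0 \<le> t" "t \<le> 1"
  shows "\<exists>i < M^m. real i / real M ^ m \<le> t \<and> t \<le> real (i + 1) / real M ^ m"
proof -
  have Mm: "real M ^ m \<ge> 1" "M^m \<ge> 1" using M by auto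
  define y where "y = t * real M ^ m"
  have y: "0 \<le> y" "y \<le> real M ^ m" using t Mm by (auto simp: y_def mult_left_le_one_le)
  define i where "i = min (nat \<lfloor>y\<rfloor>) (M^m - 1)"
  have "real i \<le> y \<and> y \<le> real i + 1"
  proof (cases "nat \<lfloor>y\<rfloor> \<le> M^m - 1")
    case True
    then show ?thesis using y by (simp add: i_def)
  next
    case False
    then have "real M ^ m \<le> real (nat \<lfloor>y\<rfloor>)" by (simp flip: of_nat_power)
    then show ?thesis using False y Mm by (simp add: i_def) linarith
  qed
  moreover have "i < M^m" using Mm(2) by (simp add: i_def)
  moreover have "0 < real M ^ m" using M by simp
  ultimately show ?thesis by (intro exI[of _ i]) (simp add: y_def pos_divide_le_eq pos_le_divide_eq)
qed

lemma UN_grid_cube_eq_unit_cube: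
  assumes M: "M \<ge> 1"
  shows "\<Union>(grid_cube M m ` grid_idx M m) = (cbox 0 1 :: (real^'n::finite) set)"
proof (intro set_eqI iffI)
  fix x :: "real^'n" assume "x \<in> \<Union>(grid_cube M m ` grid_idx M m)"
  then obtain i where i: "i \<in> grid_idx M m" "x \<in> grid_cube M m i" by blast
  have "i l + 1 \<le> M^m" for l using i(1) by (simp add: grid_idx_def Suc_le_eq)
  then have "real (i l + 1) \<le> real M ^ m" for l by (metis of_nat_le_iff of_nat_power)
  moreover have "real (i l) / real M ^ m \<le> x$l" "x$l \<le> real (i l + 1) / real M ^ m" for l
    using i(2) unfolding grid_cube_def mem_box_cart by auto
  ultimately have "0 \<le> x$l \<and> x$l \<le> 1" for l
    using M by (smt (verit) divide_le_eq_1 divide_nonneg_nonneg of_nat_0_le_iff)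
  then show "x \<in> cbox 0 1" by (simp add: mem_box_cart)
next
  fix x :: "real^'n" assume "x \<in> cbox 0 1"
  then have "\<exists>i < M^m. real i / real M ^ m \<le> x$l \<and> x$l \<le> real (i + 1) / real M ^ m" for l
    using exists_grid_interval[OF M] by (simp add: mem_box_cart)
  then obtain i where "\<forall>l. i l < M^m \<and> real (i l) / real M ^ m \<le> x$l \<and> x$l \<le> real (i l + 1) / real M ^ m"
    using choice[of "\<lambda>l i. i < M^m \<and> real i / real M ^ m \<le> x$l \<and> x$l \<le> real (i + 1) / real M ^ m"]
    by blast
  then show "x \<in> \<Union>(grid_cube M m ` grid_idx M m)"
    unfolding grid_cube_def grid_idx_def by (auto simp: mem_box_cart)
qed

lemma intrinsic_volume_Cset_sub_Suc:
  assumes M: "M \<ge> 1" and jj: "jj \<in> grid_idx M 1"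
  shows "intrinsic_volume k (Cset_sub M X (Suc m) (jj :: 'n::finite \<Rightarrow> nat)) = (1 / real M) ^ k *
    (if X 1 jj then intrinsic_volume k (Cset M (subcube_coins M X jj) m)
     else intrinsic_volume k (cbox (0::real^'n) 1))"
proof -
  define S where "S = {i \<in> grid_idx M m. \<not> (X 1 jj \<and> kept M (subcube_coins M X jj) m i)}"
  have "finite S" unfolding S_def by (rule finite_subset[OF _ finite_grid_idx]) auto
  then have "finite (grid_cube M m ` S)" "\<forall>Y\<in>grid_cube M m ` S. is_box Y"
    using grid_cube_is_box[OF M] by auto
  from intrinsic_volume_scaleR_translate[OF _ this]
  have "intrinsic_volume k (Cset_sub M X (Suc m) jj) =
      (1 / real M) ^ k * intrinsic_volume k (\<Union>(grid_cube M m ` S))"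
    using M unfolding Cset_sub_Suc[OF M jj] S_def[symmetric] subcube_map_def by simp
  moreover have "\<Union>(grid_cube M m ` S) = (if X 1 jj then Cset M (subcube_coins M X jj) m else cbox 0 1)"
    using UN_grid_cube_eq_unit_cube[OF M, of m] unfolding S_def Cset_eq_UN by auto
  ultimately show ?thesis by simp
qed

lemma Cset_Suc_eq_UN_Cset_sub:
  assumes M: "M \<ge> 1"
  shows "Cset M X (Suc m) = (\<Union>jj\<in>grid_idx M 1. Cset_sub M X (Suc m) (jj :: 'n::finite \<Rightarrow> nat))"
proof (intro set_eqI iffI)
  fix x assume "x \<in> Cset M X (Suc m)"
  then obtain i where i: "i \<in> grid_idx M (Suc m)" "\<not> kept M X (Suc m) i" "x \<in> grid_cube M (Suc m) i"
    unfolding Cset_eq_UN by blast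
  define jj where "jj = (\<lambda>l. i l div M^m)"
  have "jj \<in> grid_idx M 1" using i(1) M unfolding grid_idx_def jj_def
    by (auto simp: div_less_iff_less_mult mult.commute)
  moreover have "grid_cube M (Suc m) i \<subseteq> grid_cube M 1 jj"
    using grid_cube_subset_grid_cube_1_iff[OF M, of m i jj] by (simp add: jj_def)
  ultimately show "x \<in> (\<Union>jj\<in>grid_idx M 1. Cset_sub M X (Suc m) jj)"
    using i unfolding Cset_sub_eq_UN by blast
next
  fix x assume "x \<in> (\<Union>jj\<in>grid_idx M 1. Cset_sub M X (Suc m) jj)"
  then show "x \<in> Cset M X (Suc m)" unfolding Cset_sub_eq_UN Cset_eq_UN by blast
qed

definition level_one_walls :: "nat \<Rightarrow> real set" where
  "level_one_walls M = (\<lambda>a. real a / real M) ` {1..<M}"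

lemma finite_level_one_walls: "finite (level_one_walls M)"
  by (simp add: level_one_walls_def)

lemma card_level_one_walls_le: "card (level_one_walls M) \<le> M"
proof -
  have "card (level_one_walls M) \<le> card {1..<M}"
    unfolding level_one_walls_def by (rule card_image_le) simp
  then show ?thesis by simp
qed

lemma Int_grid_cube_1_subset_walls:
  assumes M: "M \<ge> 1" and j1: "j1 \<in> grid_idx M 1" and j2: "j2 \<in> grid_idx M 1" and ne: "j1 \<noteq> j2"
  shows "grid_cube M 1 j1 \<inter> grid_cube M 1 (j2 :: 'n::finite \<Rightarrow> nat) \<subseteq> {x. \<exists>l. x$l \<in> level_one_walls M}"
proof
  fix x assume x: "x \<in> grid_cube M 1 j1 \<inter> grid_cube M 1 j2"
  obtain l where l: "j1 l \<noteq> j2 l" using ne by auto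
  have b: "real (j1 l) / real M \<le> x$l" "x$l \<le> real (j1 l + 1) / real M"
    "real (j2 l) / real M \<le> x$l" "x$l \<le> real (j2 l + 1) / real M"
  proof -
    have "x \<in> grid_cube M 1 j1" "x \<in> grid_cube M 1 j2" using x by auto
    then have "\<forall>i. (\<chi> j. real (j1 j) / real M ^ 1) $ i \<le> x $ i \<and> x $ i \<le> (\<chi> j. real (j1 j + 1) / real M ^ 1) $ i"
      "\<forall>i. (\<chi> j. real (j2 j) / real M ^ 1) $ i \<le> x $ i \<and> x $ i \<le> (\<chi> j. real (j2 j + 1) / real M ^ 1) $ i"
      unfolding grid_cube_def mem_box_cart by blast+
    then show "real (j1 l) / real M \<le> x$l" "x$l \<le> real (j1 l + 1) / real M"
      "real (j2 l) / real M \<le> x$l" "x$l \<le> real (j2 l + 1) / real M" by simp_all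
  qed
  have lt: "j1 l < M" "j2 l < M" using j1 j2 by (auto simp: grid_idx_def)
  have mono: "a < b \<Longrightarrow> real (a + 1) / real M \<le> real b / real M" for a b
    using M by (simp add: divide_right_mono)
  have "x$l = real (max (j1 l) (j2 l)) / real M" "max (j1 l) (j2 l) \<in> {1..<M}"
    using l b lt mono[of "j1 l" "j2 l"] mono[of "j2 l" "j1 l"] by (auto simp: max_def)
  then show "x \<in> {x. \<exists>l. x$l \<in> level_one_walls M}" unfolding level_one_walls_def by blast
qed

lemma Inter_Cset_sub_subset_walls:
  assumes M: "M \<ge> 1" and T: "T \<subseteq> grid_idx M 1" "2 \<le> card T"
  shows "(\<Inter>jj\<in>T. Cset_sub M X n (jj :: 'n::finite \<Rightarrow> nat)) \<subseteq> {x. \<exists>l. x$l \<in> level_one_walls M}"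
proof -
  obtain j1 j2 where j: "j1 \<in> T" "j2 \<in> T" "j1 \<noteq> j2"
    using T(2) by (metis card_le_Suc0_iff_eq card.infinite not_less_eq_eq numeral_2_eq_2 zero_le)
  have "(\<Inter>jj\<in>T. Cset_sub M X n jj) \<subseteq> grid_cube M 1 j1 \<inter> grid_cube M 1 j2"
    using j Cset_sub_subset by blast
  also have "\<dots> \<subseteq> {x. \<exists>l. x$l \<in> level_one_walls M}"
    using Int_grid_cube_1_subset_walls[OF M _ _ j(3)] j T(1) by blast
  finally show ?thesis .
qed

lemma kept_cong:
  assumes "\<And>m i. 1 \<le> m \<Longrightarrow> m \<le> n \<Longrightarrow> i \<in> grid_idx M m \<Longrightarrow> X m i = Y m i"
    and "i \<in> grid_idx M n" and M: "M \<ge> 1"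
  shows "kept M X n i = kept M Y n i"
  using assms(1,2)
proof (induction n arbitrary: i)
  case (Suc n)
  have "(\<lambda>j. i j div M) \<in> grid_idx M n" using Suc.prems(2) M
    by (auto simp: grid_idx_def div_less_iff_less_mult mult.commute)
  then show ?case using Suc by simp
qed simp

lemma Cset_cong:
  assumes "\<And>m i. 1 \<le> m \<Longrightarrow> m \<le> n \<Longrightarrow> i \<in> grid_idx M m \<Longrightarrow> X m i = Y m i" and M: "M \<ge> 1"
  shows "Cset M X n = Cset M Y n"
  unfolding Cset_eq_UN using kept_cong[of n M X Y, OF assms(1) _ M] by (metis (no_types, lifting))

lemma Cset_sub_cong:
  assumes "\<And>m i. 1 \<le> m \<Longrightarrow> m \<le> n \<Longrightarrow> i \<in> grid_idx M m \<Longrightarrow> X m i = Y m i" and M: "M \<ge> 1"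
  shows "Cset_sub M X n jj = Cset_sub M Y n jj"
  unfolding Cset_sub_eq_UN using kept_cong[of n M X Y, OF assms(1) _ M] by (metis (no_types, lifting))

lemma sum_nonempty_subsets_split:
  assumes J: "finite J"
  shows "(\<Sum>T | T \<subseteq> J \<and> T \<noteq> {}. f T) = (\<Sum>j\<in>J. f {j}) + (\<Sum>T | T \<subseteq> J \<and> 2 \<le> card T. f T)"
proof -
  have "{T. T \<subseteq> J \<and> T \<noteq> {}} = (\<lambda>j. {j}) ` J \<union> {T. T \<subseteq> J \<and> 2 \<le> card T}"
  proof (intro set_eqI iffI)
    fix T assume T: "T \<in> {T. T \<subseteq> J \<and> T \<noteq> {}}"
    then have "finite T" "T \<noteq> {}" using J by (auto intro: finite_subset)
    then have "card T = 1 \<or> 2 \<le> card T" by (cases "card T") auto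
    then show "T \<in> (\<lambda>j. {j}) ` J \<union> {T. T \<subseteq> J \<and> 2 \<le> card T}"
      using T by (auto simp: card_1_singleton_iff)
  qed auto
  moreover have "(\<lambda>j. {j}) ` J \<inter> {T. T \<subseteq> J \<and> 2 \<le> card T} = {}" by auto
  ultimately show ?thesis
    using J by (simp add: sum.union_disjoint sum.reindex)
qed

lemma intrinsic_volume_Cset_Suc:
  assumes M: "M \<ge> 1"
  shows "intrinsic_volume k (Cset M Z (Suc m) :: (real^'n::finite) set) =
    (\<Sum>jj\<in>grid_idx M 1. intrinsic_volume k (Cset_sub M Z (Suc m) jj :: (real^'n) set)) +
    (\<Sum>T | T \<subseteq> grid_idx M 1 \<and> 2 \<le> card T. (-1) ^ (card T - 1) *
        intrinsic_volume k (\<Inter>jj\<in>T. Cset_sub M Z (Suc m) jj :: (real^'n) set))"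
proof -
  have "(-1::real) ^ (card T + 1) = (-1) ^ (card T - 1)" if "2 \<le> card T" for T :: "('n \<Rightarrow> nat) set"
    using that by (cases "card T") simp_all
  then show ?thesis
    unfolding Cset_Suc_eq_UN_Cset_sub[OF M]
      intrinsic_volume_UN_incl_excl[OF finite_unif_grid finite_grid_idx grid_polybox_Cset_sub[OF M]]
      sum_nonempty_subsets_split[OF finite_grid_idx]
    by (auto intro!: sum.cong)
qed

lemma abs_intrinsic_volume_Inter_Cset_sub_le:
  assumes M: "M \<ge> 1" and T: "T \<subseteq> grid_idx M 1" "2 \<le> card T"
  shows "\<bar>intrinsic_volume k (\<Inter>jj\<in>T. Cset_sub M Z n jj :: (real^'n::finite) set)\<bar> \<le>
    card {S::'n set. card S = k} * (CARD('n) * M) * 4 ^ (CARD('n) - 1) *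
    (real M ^ (CARD('n) - 1) / real M ^ k) ^ n"
proof -
  have "finite T" "T \<noteq> {}" using T finite_subset[OF T(1) finite_grid_idx] by auto
  then have "grid_polybox (\<lambda>_::'n. unif_grid M n) (\<Inter>jj\<in>T. Cset_sub M Z n jj)"
    by (intro grid_polybox_INT grid_polybox_Cset_sub[OF M])
  from abs_intrinsic_volume_le_hyperplanes[OF finite_unif_grid this
      Inter_Cset_sub_subset_walls[OF M T] finite_level_one_walls _
      line_cells_unif_grid_length_le[OF M] card_unif_grid_le]
  have "\<bar>intrinsic_volume k (\<Inter>jj\<in>T. Cset_sub M Z n jj :: (real^'n) set)\<bar> \<le>
      card {S::'n set. card S = k} * (1 / real M ^ n) ^ k *
      (CARD('n) * card (level_one_walls M) * (2 * (M^n + 1)) ^ (CARD('n) - 1))"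
    by simp
  also have "\<dots> \<le> card {S::'n set. card S = k} * (1 / real M ^ n) ^ k *
      (CARD('n) * M * (4 * real M ^ n) ^ (CARD('n) - 1))"
  proof -
    have "real (2 * (M^n + 1)) \<le> 4 * real M ^ n" using M by simp
    then have "real ((2 * (M^n + 1)) ^ (CARD('n) - 1)) \<le> (4 * real M ^ n) ^ (CARD('n) - 1)"
      unfolding of_nat_power by (rule power_mono) simp
    then show ?thesis
      using card_level_one_walls_le[of M]
      by (intro mult_left_mono) (auto simp: mult_mono)
  qed
  also have "\<dots> = card {S::'n set. card S = k} * (CARD('n) * M) * 4 ^ (CARD('n) - 1) *
      (real M ^ (CARD('n) - 1) / real M ^ k) ^ n"
    by (simp add: power_mult_distrib power_divide power_mult[symmetric] mult.commute mult.left_commute)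
  finally show ?thesis .
qed

section \<open>Independent Bernoulli coins\<close>

definition bernoulli_weight :: "real \<Rightarrow> 'c set \<Rightarrow> ('c \<Rightarrow> bool) \<Rightarrow> real" where
  "bernoulli_weight p I \<tau> = (\<Prod>x\<in>I. if \<tau> x then p else 1 - p)"

lemma sum_bernoulli_weight: "finite I \<Longrightarrow> (\<Sum>\<tau>\<in>PiE I (\<lambda>_. UNIV). bernoulli_weight p I \<tau>) = 1"
  unfolding bernoulli_weight_def by (subst prod_sum_PiE[symmetric]) (simp_all add: UNIV_bool)

lemma bernoulli_weight_nonneg: "0 \<le> p \<Longrightarrow> p \<le> 1 \<Longrightarrow> 0 \<le> bernoulli_weight p I \<tau>"
  unfolding bernoulli_weight_def by (intro prod_nonneg) auto

lemma bernoulli_weight_insert: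
  "finite I \<Longrightarrow> x \<notin> I \<Longrightarrow>
    bernoulli_weight p (insert x I) (\<tau>(x := b)) = (if b then p else 1 - p) * bernoulli_weight p I \<tau>"
  unfolding bernoulli_weight_def by (auto intro!: prod.cong)

lemma sum_PiE_insert:
  assumes "x \<notin> I"
  shows "(\<Sum>\<tau>\<in>PiE (insert x I) (\<lambda>_. UNIV). f \<tau>) = (\<Sum>b\<in>UNIV. \<Sum>\<tau>\<in>PiE I (\<lambda>_. UNIV). f (\<tau>(x := b)))"
proof -
  have "(\<Sum>\<tau>\<in>PiE (insert x I) (\<lambda>_. UNIV). f \<tau>) =
      (\<Sum>\<tau>\<in>(\<lambda>(b, \<tau>). \<tau>(x := b)) ` (UNIV \<times> PiE I (\<lambda>_. UNIV)). f \<tau>)"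
    by (simp add: PiE_insert_eq)
  also have "\<dots> = (\<Sum>(b, \<tau>)\<in>UNIV \<times> PiE I (\<lambda>_. UNIV). f (\<tau>(x := b)))"
    using inj_combinator[OF assms, of "\<lambda>_. UNIV"] by (subst sum.reindex) (simp_all add: case_prod_unfold)
  also have "\<dots> = (\<Sum>b\<in>UNIV. \<Sum>\<tau>\<in>PiE I (\<lambda>_. UNIV). f (\<tau>(x := b)))"
    by (rule sum.cartesian_product[symmetric])
  finally show ?thesis .
qed

lemma sum_bernoulli_weight_insert:
  assumes I: "finite I" "x \<notin> I" and A: "\<And>\<tau> b. A (\<tau>(x := b)) = A \<tau>"
  shows "(\<Sum>\<tau>\<in>PiE (insert x I) (\<lambda>_. UNIV). (if \<tau> x then A \<tau> else c) * bernoulli_weight p (insert x I) \<tau>) =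
    p * (\<Sum>\<tau>\<in>PiE I (\<lambda>_. UNIV). A \<tau> * bernoulli_weight p I \<tau>) + (1 - p) * c"
proof -
  have "(\<Sum>\<tau>\<in>PiE (insert x I) (\<lambda>_. UNIV). (if \<tau> x then A \<tau> else c) * bernoulli_weight p (insert x I) \<tau>) =
      (\<Sum>b\<in>UNIV. \<Sum>\<tau>\<in>PiE I (\<lambda>_. UNIV). (if b then A \<tau> else c) * ((if b then p else 1 - p) * bernoulli_weight p I \<tau>))"
    unfolding sum_PiE_insert[OF I(2)] bernoulli_weight_insert[OF I] A fun_upd_same ..
  also have "\<dots> = p * (\<Sum>\<tau>\<in>PiE I (\<lambda>_. UNIV). A \<tau> * bernoulli_weight p I \<tau>) +
      (1 - p) * c * (\<Sum>\<tau>\<in>PiE I (\<lambda>_. UNIV). bernoulli_weight p I \<tau>)"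
    by (simp add: UNIV_bool sum_distrib_left mult_ac)
  finally show ?thesis by (simp add: sum_bernoulli_weight[OF I(1)])
qed

lemma abs_sum_bernoulli_weight_le:
  assumes "finite I" "0 \<le> p" "p \<le> 1" and f: "\<And>\<tau>. \<bar>f \<tau>\<bar> \<le> B"
  shows "\<bar>\<Sum>\<tau>\<in>PiE I (\<lambda>_. UNIV). f \<tau> * bernoulli_weight p I \<tau>\<bar> \<le> B"
proof -
  have "\<bar>\<Sum>\<tau>\<in>PiE I (\<lambda>_. UNIV). f \<tau> * bernoulli_weight p I \<tau>\<bar> \<le>
      (\<Sum>\<tau>\<in>PiE I (\<lambda>_. UNIV). B * bernoulli_weight p I \<tau>)"
    by (intro order.trans[OF sum_abs] sum_mono)
      (simp add: abs_mult abs_of_nonneg[OF bernoulli_weight_nonneg[OF assms(2,3)]]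
        mult_right_mono[OF f bernoulli_weight_nonneg[OF assms(2,3)]])
  also have "\<dots> = B" using sum_bernoulli_weight[OF assms(1)] by (simp flip: sum_distrib_left)
  finally show ?thesis .
qed

context prob_space
begin

lemma prob_bernoulli_coins:
  fixes Y :: "'i \<Rightarrow> 'a \<Rightarrow> bool" and s :: "'c \<Rightarrow> 'i"
  assumes meas: "\<And>y. Y y \<in> measurable M (count_space UNIV)"
    and indep: "indep_vars (\<lambda>_. count_space UNIV) Y Idx"
    and bern: "\<And>y. y \<in> Idx \<Longrightarrow> prob {\<omega> \<in> space M. Y y \<omega>} = p"
    and I: "finite I" "s ` I \<subseteq> Idx" "inj_on s I"
  shows "prob {\<omega> \<in> space M. \<forall>x\<in>I. Y (s x) \<omega> = \<tau> x} = bernoulli_weight p I \<tau>"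
proof (cases "I = {}")
  case True
  then show ?thesis by (simp add: bernoulli_weight_def prob_space)
next
  case False
  have ev: "{\<omega> \<in> space M. Y y \<omega> = b} \<in> events" for y b
    using measurable_sets[OF meas[of y], of "{b}"] by (simp add: vimage_def Int_def conj_commute)
  define A where "A = (\<lambda>y. Y y -` {\<tau> (inv_into I s y)} \<inter> space M)"
  have "indep_sets (\<lambda>i. {Y i -` A \<inter> space M | A. A \<in> sets (count_space UNIV)}) Idx"
    using indep unfolding indep_vars_def2 by blast
  then have "prob (\<Inter>y\<in>s ` I. A y) = (\<Prod>y\<in>s ` I. prob (A y))"
    by (rule indep_setsD[OF _ I(2)]) (use False I(1) in \<open>auto simp: A_def\<close>)
  also have "(\<Inter>y\<in>s ` I. A y) = {\<omega> \<in> space M. \<forall>x\<in>I. Y (s x) \<omega> = \<tau> x}"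
    using False I(3) by (auto simp: A_def)
  also have "(\<Prod>y\<in>s ` I. prob (A y)) = (\<Prod>x\<in>I. prob {\<omega> \<in> space M. Y (s x) \<omega> = \<tau> x})"
    using I(3) by (simp add: prod.reindex A_def Int_def vimage_def conj_commute cong: prod.cong)
  also have "\<dots> = bernoulli_weight p I \<tau>"
    unfolding bernoulli_weight_def
  proof (intro prod.cong refl)
    fix x assume x: "x \<in> I"
    then have "{\<omega> \<in> space M. Y (s x) \<omega> = False} = space M - {\<omega> \<in> space M. Y (s x) \<omega>}" by auto
    then show "prob {\<omega> \<in> space M. Y (s x) \<omega> = \<tau> x} = (if \<tau> x then p else 1 - p)"
      using bern[of "s x"] prob_compl[OF ev[of "s x" True]] x I(2) by (cases "\<tau> x") auto
  qed
  finally show ?thesis .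
qed

lemma expectation_bernoulli_coins:
  fixes Y :: "'i \<Rightarrow> 'a \<Rightarrow> bool" and s :: "'c \<Rightarrow> 'i" and g :: "('c \<Rightarrow> bool) \<Rightarrow> real"
  assumes meas: "\<And>y. Y y \<in> measurable M (count_space UNIV)"
    and indep: "indep_vars (\<lambda>_. count_space UNIV) Y Idx"
    and bern: "\<And>y. y \<in> Idx \<Longrightarrow> prob {\<omega> \<in> space M. Y y \<omega>} = p"
    and I: "finite I" "s ` I \<subseteq> Idx" "inj_on s I"
    and g: "\<And>\<sigma> \<tau>. (\<forall>x\<in>I. \<sigma> x = \<tau> x) \<Longrightarrow> g \<sigma> = g \<tau>"
  shows "expectation (\<lambda>\<omega>. g (\<lambda>x. Y (s x) \<omega>)) =
    (\<Sum>\<tau>\<in>PiE I (\<lambda>_. UNIV). g \<tau> * bernoulli_weight p I \<tau>)"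
proof -
  define E where "E = (\<lambda>\<tau>. {\<omega> \<in> space M. \<forall>x\<in>I. Y (s x) \<omega> = \<tau> x})"
  have "{\<omega> \<in> space M. Y y \<omega> = b} \<in> events" for y b
    using measurable_sets[OF meas[of y], of "{b}"] by (simp add: vimage_def Int_def conj_commute)
  then have ev: "E \<tau> \<in> events" for \<tau>
    unfolding E_def by (intro sets.sets_Collect_finite_All I(1))
  have "g (\<lambda>x. Y (s x) \<omega>) = (\<Sum>\<tau>\<in>PiE I (\<lambda>_. UNIV). g \<tau> * indicator (E \<tau>) \<omega>)"
    if \<omega>: "\<omega> \<in> space M" for \<omega>
  proof -
    define \<tau>\<omega> where "\<tau>\<omega> = restrict (\<lambda>x. Y (s x) \<omega>) I"
    have "\<omega> \<in> E \<tau> \<longleftrightarrow> \<tau> = \<tau>\<omega>" if "\<tau> \<in> PiE I (\<lambda>_. UNIV)" for \<tau>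
      using that \<omega> unfolding E_def \<tau>\<omega>_def by (auto simp: PiE_iff extensional_def fun_eq_iff)
    then have "(\<Sum>\<tau>\<in>PiE I (\<lambda>_. UNIV). g \<tau> * indicator (E \<tau>) \<omega>) =
        (\<Sum>\<tau>\<in>PiE I (\<lambda>_. UNIV). if \<tau> = \<tau>\<omega> then g \<tau> else 0)"
      by (intro sum.cong) (simp_all add: indicator_def)
    also have "\<dots> = g \<tau>\<omega>" using I(1) by (simp add: finite_PiE \<tau>\<omega>_def)
    also have "\<dots> = g (\<lambda>x. Y (s x) \<omega>)" by (rule g) (simp add: \<tau>\<omega>_def)
    finally show ?thesis by simp
  qed
  then have "expectation (\<lambda>\<omega>. g (\<lambda>x. Y (s x) \<omega>)) =
      expectation (\<lambda>\<omega>. \<Sum>\<tau>\<in>PiE I (\<lambda>_. UNIV). g \<tau> * indicator (E \<tau>) \<omega>)"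
    by (intro Bochner_Integration.integral_cong) simp_all
  also have "\<dots> = (\<Sum>\<tau>\<in>PiE I (\<lambda>_. UNIV). g \<tau> * prob (E \<tau>))"
    using ev by (subst Bochner_Integration.integral_sum)
      (auto simp: integrable_indicator_iff emeasure_eq_measure)
  also have "\<dots> = (\<Sum>\<tau>\<in>PiE I (\<lambda>_. UNIV). g \<tau> * bernoulli_weight p I \<tau>)"
    unfolding E_def using prob_bernoulli_coins[OF meas indep bern I] by simp
  finally show ?thesis .
qed

end

section \<open>Expected intrinsic volumes\<close>

definition coin_idx :: "nat \<Rightarrow> (nat \<times> ('n \<Rightarrow> nat)) set" where
  "coin_idx M = {(n, i). 1 \<le> n \<and> i \<in> grid_idx M n}"

definition coins_upto :: "nat \<Rightarrow> nat \<Rightarrow> (nat \<times> ('n \<Rightarrow> nat)) set" where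
  "coins_upto M n = {(m, i). 1 \<le> m \<and> m \<le> n \<and> i \<in> grid_idx M m}"

lemma finite_coins_upto: "finite (coins_upto M n :: (nat \<times> ('n::finite \<Rightarrow> nat)) set)"
  by (rule finite_subset[of _ "SIGMA m:{1..n}. grid_idx M m"])
    (auto simp: coins_upto_def intro: finite_grid_idx)

lemma Cset_curry_cong:
  "M \<ge> 1 \<Longrightarrow> \<forall>x\<in>coins_upto M n. \<sigma> x = \<tau> x \<Longrightarrow> Cset M (curry \<sigma>) n = Cset M (curry \<tau>) n"
  by (rule Cset_cong) (auto simp: coins_upto_def)

lemma Cset_sub_curry_cong:
  "M \<ge> 1 \<Longrightarrow> \<forall>x\<in>coins_upto M n. \<sigma> x = \<tau> x \<Longrightarrow> Cset_sub M (curry \<sigma>) n = Cset_sub M (curry \<tau>) n"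
  by (rule ext, rule Cset_sub_cong) (auto simp: coins_upto_def)

text \<open>The coin of the level-1 cube \<open>jj\<close> (at the new index \<open>(0, jj)\<close>) together with the coins
  below it, re-indexed as the coins of a copy of the whole construction.\<close>

definition subcube_coin :: "nat \<Rightarrow> ('n \<Rightarrow> nat) \<Rightarrow> nat \<times> ('n \<Rightarrow> nat) \<Rightarrow> nat \<times> ('n \<Rightarrow> nat)" where
  "subcube_coin M jj = (\<lambda>(m, i). if m = 0 then (1, jj) else (Suc m, subcube_index M jj m i))"

lemma inj_on_subcube_coin:
  assumes jj: "jj \<in> grid_idx M 1"
  shows "inj_on (subcube_coin M jj) (insert (0, jj) (coins_upto M m))"
proof (rule inj_onI)
  fix x y assume "x \<in> insert (0, jj) (coins_upto M m)" "y \<in> insert (0, jj) (coins_upto M m)"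
    and eq: "subcube_coin M jj x = subcube_coin M jj y"
  then consider "x = (0, jj)" "y = (0, jj)"
    | m1 i1 m2 i2 where "x = (m1, i1)" "y = (m2, i2)" "1 \<le> m1" "1 \<le> m2"
        "i1 \<in> grid_idx M m1" "i2 \<in> grid_idx M m2"
    | m' i where "x = (0, jj) \<and> y = (m', i) \<or> x = (m', i) \<and> y = (0, jj)" "1 \<le> m'"
    by (auto simp: coins_upto_def)
  then show "x = y"
  proof cases
    case 2
    then have "m1 = m2" "subcube_index M jj m1 i1 = subcube_index M jj m2 i2"
      using eq by (auto simp: subcube_coin_def)
    then have "i1 = i2"
      using subcube_index_in_grid_idx(3)[OF jj 2(5)] subcube_index_in_grid_idx(3)[OF jj 2(6)]
      by (intro ext) metis
    then show ?thesis using 2 \<open>m1 = m2\<close> by simp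
  qed (use eq in \<open>auto simp: subcube_coin_def\<close>)
qed

lemma subcube_coin_image_subset:
  assumes jj: "jj \<in> grid_idx M 1"
  shows "subcube_coin M jj ` insert (0, jj) (coins_upto M m) \<subseteq> coin_idx M"
  using jj subcube_index_in_grid_idx(1)[OF jj]
  by (auto simp: subcube_coin_def coins_upto_def coin_idx_def)

locale fractal_percolation = prob_space Pr for Pr :: "'a measure" +
  fixes X :: "nat \<Rightarrow> ('n::finite \<Rightarrow> nat) \<Rightarrow> 'a \<Rightarrow> bool" and M :: nat and p :: real
  assumes M: "1 \<le> M" and p: "0 \<le> p" "p \<le> 1"
    and meas: "\<And>n i. X n i \<in> measurable Pr (count_space UNIV)"
    and indep: "indep_vars (\<lambda>_. count_space UNIV) (\<lambda>(n, i). X n i) (coin_idx M)"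
    and bern: "\<And>n i. 1 \<le> n \<Longrightarrow> i \<in> grid_idx M n \<Longrightarrow> prob {\<omega> \<in> space Pr. X n i \<omega>} = p"
begin

lemma expectation_bernoulli_coins_upto:
  assumes G: "\<And>\<sigma> \<tau>. \<forall>x\<in>coins_upto M n. \<sigma> x = \<tau> x \<Longrightarrow> G (curry \<sigma>) = G (curry \<tau>)"
  shows "expectation (\<lambda>\<omega>. G (\<lambda>m i. X m i \<omega>)) =
    (\<Sum>\<tau>\<in>PiE (coins_upto M n) (\<lambda>_. UNIV). G (curry \<tau>) * bernoulli_weight p (coins_upto M n) \<tau>)"
proof -
  have "expectation (\<lambda>\<omega>. (\<lambda>\<sigma>. G (curry \<sigma>)) (\<lambda>x. (\<lambda>(n, i). X n i) (id x) \<omega>)) =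
    (\<Sum>\<tau>\<in>PiE (coins_upto M n) (\<lambda>_. UNIV). G (curry \<tau>) * bernoulli_weight p (coins_upto M n) \<tau>)"
    by (rule expectation_bernoulli_coins[OF _ indep _ finite_coins_upto])
      (use meas bern G in \<open>auto simp: coin_idx_def coins_upto_def\<close>)
  then show ?thesis by (simp add: curry_def)
qed

lemma expectation_intrinsic_volume_Cset_sub_Suc:
  assumes jj: "jj \<in> grid_idx M 1"
  shows "expectation (\<lambda>\<omega>. intrinsic_volume k (Cset_sub M (\<lambda>m i. X m i \<omega>) (Suc m) jj :: (real^'n) set)) =
    (1 / real M) ^ k * ((1 - p) * intrinsic_volume k (cbox (0::real^'n) 1) +
      p * expectation (\<lambda>\<omega>. intrinsic_volume k (Cset M (\<lambda>m i. X m i \<omega>) m :: (real^'n) set)))"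
proof -
  define I where "I = insert (0, jj) (coins_upto M m)"
  define q where "q = intrinsic_volume k (cbox (0::real^'n) 1)"
  define A where "A = (\<lambda>\<tau>. intrinsic_volume k (Cset M (curry \<tau>) m :: (real^'n) set))"
  have notin: "(0, jj) \<notin> coins_upto M m" by (simp add: coins_upto_def)
  have A_upd: "A (\<tau>((0, jj) := b)) = A \<tau>" for \<tau> b
    unfolding A_def using notin by (metis Cset_curry_cong[OF M] fun_upd_other)
  have "Cset M (subcube_coins M (\<lambda>m i. X m i \<omega>) jj) m = Cset M (curry (\<lambda>x. (\<lambda>(n, i). X n i) (subcube_coin M jj x) \<omega>)) m"
    for \<omega>
    by (rule Cset_cong[OF _ M]) (auto simp: subcube_coins_def subcube_coin_def)
  then have "intrinsic_volume k (Cset_sub M (\<lambda>m i. X m i \<omega>) (Suc m) jj :: (real^'n) set) =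
      (\<lambda>\<tau>. (1 / real M) ^ k * (if \<tau> (0, jj) then A \<tau> else q))
        (\<lambda>x. (\<lambda>(n, i). X n i) (subcube_coin M jj x) \<omega>)" for \<omega>
    by (simp add: intrinsic_volume_Cset_sub_Suc[OF M jj] A_def q_def subcube_coin_def)
  then have "expectation (\<lambda>\<omega>. intrinsic_volume k (Cset_sub M (\<lambda>m i. X m i \<omega>) (Suc m) jj :: (real^'n) set)) =
      expectation (\<lambda>\<omega>. (\<lambda>\<tau>. (1 / real M) ^ k * (if \<tau> (0, jj) then A \<tau> else q))
        (\<lambda>x. (\<lambda>(n, i). X n i) (subcube_coin M jj x) \<omega>))"
    by (simp only:)
  also have "\<dots> = (\<Sum>\<tau>\<in>PiE I (\<lambda>_. UNIV). (1 / real M) ^ k * (if \<tau> (0, jj) then A \<tau> else q) *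
      bernoulli_weight p I \<tau>)"
  proof (rule expectation_bernoulli_coins[OF _ indep])
    show "finite I" "subcube_coin M jj ` I \<subseteq> coin_idx M" "inj_on (subcube_coin M jj) I"
      unfolding I_def using finite_coins_upto subcube_coin_image_subset[OF jj]
        inj_on_subcube_coin[OF jj] by simp_all
    fix \<sigma> \<tau> :: "nat \<times> ('n \<Rightarrow> nat) \<Rightarrow> bool" assume "\<forall>x\<in>I. \<sigma> x = \<tau> x"
    then have "\<sigma> (0, jj) = \<tau> (0, jj)" "A \<sigma> = A \<tau>"
      unfolding I_def A_def using Cset_curry_cong[OF M, of m \<sigma> \<tau>] by auto
    then show "(1 / real M) ^ k * (if \<sigma> (0, jj) then A \<sigma> else q) =
        (1 / real M) ^ k * (if \<tau> (0, jj) then A \<tau> else q)" by simp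
  qed (use meas bern in \<open>auto simp: coin_idx_def\<close>)
  also have "\<dots> = (1 / real M) ^ k * (p * (\<Sum>\<tau>\<in>PiE (coins_upto M m) (\<lambda>_. UNIV).
      A \<tau> * bernoulli_weight p (coins_upto M m) \<tau>) + (1 - p) * q)"
    unfolding I_def mult.assoc sum_distrib_left[symmetric]
    by (simp add: sum_bernoulli_weight_insert[where A=A, OF finite_coins_upto notin A_upd])
  also have "(\<Sum>\<tau>\<in>PiE (coins_upto M m) (\<lambda>_. UNIV). A \<tau> * bernoulli_weight p (coins_upto M m) \<tau>) =
      expectation (\<lambda>\<omega>. intrinsic_volume k (Cset M (\<lambda>m i. X m i \<omega>) m :: (real^'n) set))"
    unfolding A_def by (rule expectation_bernoulli_coins_upto[symmetric]) (metis Cset_curry_cong[OF M])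
  finally show ?thesis by (simp add: q_def algebra_simps)
qed

lemma expectation_add_coins_upto:
  fixes F G :: "(nat \<Rightarrow> ('n \<Rightarrow> nat) \<Rightarrow> bool) \<Rightarrow> real"
  assumes F: "\<And>\<sigma> \<tau>. \<forall>x\<in>coins_upto M n. \<sigma> x = \<tau> x \<Longrightarrow> F (curry \<sigma>) = F (curry \<tau>)"
    and G: "\<And>\<sigma> \<tau>. \<forall>x\<in>coins_upto M n. \<sigma> x = \<tau> x \<Longrightarrow> G (curry \<sigma>) = G (curry \<tau>)"
  shows "expectation (\<lambda>\<omega>. F (\<lambda>m i. X m i \<omega>) + G (\<lambda>m i. X m i \<omega>)) =
    expectation (\<lambda>\<omega>. F (\<lambda>m i. X m i \<omega>)) + expectation (\<lambda>\<omega>. G (\<lambda>m i. X m i \<omega>))"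
proof -
  have "expectation (\<lambda>\<omega>. (\<lambda>Z. F Z + G Z) (\<lambda>m i. X m i \<omega>)) =
      (\<Sum>\<tau>\<in>PiE (coins_upto M n) (\<lambda>_. UNIV). (F (curry \<tau>) + G (curry \<tau>)) * bernoulli_weight p (coins_upto M n) \<tau>)"
    by (rule expectation_bernoulli_coins_upto) (intro arg_cong2[where f="(+)"] F G; assumption)
  then show ?thesis
    by (simp add: distrib_right sum.distrib expectation_bernoulli_coins_upto[where G=F, OF F]
        expectation_bernoulli_coins_upto[where G=G, OF G])
qed

lemma expectation_sum_coins_upto:
  fixes G :: "'j \<Rightarrow> (nat \<Rightarrow> ('n \<Rightarrow> nat) \<Rightarrow> bool) \<Rightarrow> real"
  assumes J: "finite J"
    and G: "\<And>j \<sigma> \<tau>. j \<in> J \<Longrightarrow> \<forall>x\<in>coins_upto M n. \<sigma> x = \<tau> x \<Longrightarrow> G j (curry \<sigma>) = G j (curry \<tau>)"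
  shows "expectation (\<lambda>\<omega>. \<Sum>j\<in>J. G j (\<lambda>m i. X m i \<omega>)) = (\<Sum>j\<in>J. expectation (\<lambda>\<omega>. G j (\<lambda>m i. X m i \<omega>)))"
proof -
  have "expectation (\<lambda>\<omega>. (\<lambda>Z. \<Sum>j\<in>J. G j Z) (\<lambda>m i. X m i \<omega>)) =
      (\<Sum>\<tau>\<in>PiE (coins_upto M n) (\<lambda>_. UNIV). (\<Sum>j\<in>J. G j (curry \<tau>)) * bernoulli_weight p (coins_upto M n) \<tau>)"
    by (rule expectation_bernoulli_coins_upto) (intro sum.cong refl G)
  also have "\<dots> = (\<Sum>j\<in>J. \<Sum>\<tau>\<in>PiE (coins_upto M n) (\<lambda>_. UNIV). G j (curry \<tau>) * bernoulli_weight p (coins_upto M n) \<tau>)"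
    by (simp add: sum_distrib_right) (rule sum.swap)
  also have "\<dots> = (\<Sum>j\<in>J. expectation (\<lambda>\<omega>. G j (\<lambda>m i. X m i \<omega>)))"
    by (intro sum.cong refl expectation_bernoulli_coins_upto[symmetric]) (use G in blast)
  finally show ?thesis by simp
qed

lemma expectation_intrinsic_volume_Cset_Suc:
  "expectation (\<lambda>\<omega>. intrinsic_volume k (Cset M (\<lambda>m i. X m i \<omega>) (Suc m) :: (real^'n) set)) =
    real M ^ CARD('n) * (1 / real M) ^ k * ((1 - p) * intrinsic_volume k (cbox (0::real^'n) 1) +
      p * expectation (\<lambda>\<omega>. intrinsic_volume k (Cset M (\<lambda>m i. X m i \<omega>) m :: (real^'n) set))) +
    (\<Sum>T | T \<subseteq> grid_idx M 1 \<and> 2 \<le> card T. (-1) ^ (card T - 1) *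
      expectation (\<lambda>\<omega>. intrinsic_volume k (\<Inter>jj\<in>T. Cset_sub M (\<lambda>m i. X m i \<omega>) (Suc m) jj :: (real^'n) set)))"
proof -
  let ?C = "\<lambda>Z jj. Cset_sub M Z (Suc m) jj :: (real^'n) set"
  let ?TT = "{T. T \<subseteq> (grid_idx M 1 :: ('n \<Rightarrow> nat) set) \<and> 2 \<le> card T}"
  have "expectation (\<lambda>\<omega>. intrinsic_volume k (Cset M (\<lambda>m i. X m i \<omega>) (Suc m) :: (real^'n) set)) =
      expectation (\<lambda>\<omega>. (\<Sum>jj\<in>grid_idx M 1. intrinsic_volume k (?C (\<lambda>m i. X m i \<omega>) jj)) +
        (\<Sum>T\<in>?TT. (-1) ^ (card T - 1) * intrinsic_volume k (\<Inter>jj\<in>T. ?C (\<lambda>m i. X m i \<omega>) jj)))"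
    by (simp only: intrinsic_volume_Cset_Suc[OF M])
  also have "\<dots> = expectation (\<lambda>\<omega>. \<Sum>jj\<in>grid_idx M 1. intrinsic_volume k (?C (\<lambda>m i. X m i \<omega>) jj)) +
      expectation (\<lambda>\<omega>. \<Sum>T\<in>?TT. (-1) ^ (card T - 1) * intrinsic_volume k (\<Inter>jj\<in>T. ?C (\<lambda>m i. X m i \<omega>) jj))"
    by (rule expectation_add_coins_upto[where n="Suc m"]) (auto dest!: Cset_sub_curry_cong[OF M] simp del: curry_conv)
  also have "\<dots> = (\<Sum>jj\<in>grid_idx M 1. expectation (\<lambda>\<omega>. intrinsic_volume k (?C (\<lambda>m i. X m i \<omega>) jj))) +
      (\<Sum>T\<in>?TT. (-1) ^ (card T - 1) *
        expectation (\<lambda>\<omega>. intrinsic_volume k (\<Inter>jj\<in>T. ?C (\<lambda>m i. X m i \<omega>) jj)))"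
    using finite_grid_idx
    by (subst (1 2) expectation_sum_coins_upto[where n="Suc m"]) (auto dest!: Cset_sub_curry_cong[OF M] simp del: curry_conv)
  also have "\<dots> = real M ^ CARD('n) * (1 / real M) ^ k * ((1 - p) * intrinsic_volume k (cbox (0::real^'n) 1) +
      p * expectation (\<lambda>\<omega>. intrinsic_volume k (Cset M (\<lambda>m i. X m i \<omega>) m :: (real^'n) set))) +
    (\<Sum>T\<in>?TT. (-1) ^ (card T - 1) *
      expectation (\<lambda>\<omega>. intrinsic_volume k (\<Inter>jj\<in>T. ?C (\<lambda>m i. X m i \<omega>) jj)))"
    using card_grid_idx_1[of M, where 'n='n] by (simp add: expectation_intrinsic_volume_Cset_sub_Suc)
  finally show ?thesis by simp
qed

lemma abs_expectation_intrinsic_volume_Inter_Cset_sub_le: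
  assumes T: "T \<subseteq> grid_idx M 1" "2 \<le> card T"
  shows "\<bar>expectation (\<lambda>\<omega>. intrinsic_volume k (\<Inter>jj\<in>T. Cset_sub M (\<lambda>m i. X m i \<omega>) n jj :: (real^'n) set))\<bar> \<le>
    card {S::'n set. card S = k} * (CARD('n) * M) * 4 ^ (CARD('n) - 1) *
    (real M ^ (CARD('n) - 1) / real M ^ k) ^ n"
proof -
  have "expectation (\<lambda>\<omega>. intrinsic_volume k (\<Inter>jj\<in>T. Cset_sub M (\<lambda>m i. X m i \<omega>) n jj :: (real^'n) set)) =
      (\<Sum>\<tau>\<in>PiE (coins_upto M n) (\<lambda>_. UNIV). intrinsic_volume k (\<Inter>jj\<in>T. Cset_sub M (curry \<tau>) n jj :: (real^'n) set) *
        bernoulli_weight p (coins_upto M n) \<tau>)"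
    by (rule expectation_bernoulli_coins_upto) (auto dest!: Cset_sub_curry_cong[OF M] simp del: curry_conv)
  then show ?thesis
    by (simp only:) (rule abs_sum_bernoulli_weight_le[OF finite_coins_upto p
        abs_intrinsic_volume_Inter_Cset_sub_le[OF M T]])
qed

lemma summable_expectation_intrinsic_volume_Inter_Cset_sub:
  assumes T: "T \<subseteq> grid_idx M 1" "2 \<le> card T"
    and \<rho>: "\<bar>\<rho>\<bar> * real M ^ (CARD('n) - 1) < real M ^ k"
  shows "summable (\<lambda>n. \<rho> ^ n *
    expectation (\<lambda>\<omega>. intrinsic_volume k (\<Inter>jj\<in>T. Cset_sub M (\<lambda>m i. X m i \<omega>) n jj :: (real^'n) set)))"
proof (rule summable_comparison_test')
  define K where "K = card {S::'n set. card S = k} * (CARD('n) * M) * (4::real) ^ (CARD('n) - 1)"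
  define z where "z = \<bar>\<rho>\<bar> * (real M ^ (CARD('n) - 1) / real M ^ k)"
  have "0 \<le> z" "z < 1" using \<rho> M by (simp_all add: z_def field_simps)
  then show "summable (\<lambda>n. K * z ^ n)" by (intro summable_mult summable_geometric) simp
  show "norm (\<rho> ^ n * expectation (\<lambda>\<omega>. intrinsic_volume k (\<Inter>jj\<in>T. Cset_sub M (\<lambda>m i. X m i \<omega>) n jj :: (real^'n) set)))
      \<le> K * z ^ n" for n
  proof -
    let ?E = "expectation (\<lambda>\<omega>. intrinsic_volume k (\<Inter>jj\<in>T. Cset_sub M (\<lambda>m i. X m i \<omega>) n jj :: (real^'n) set))"
    have "norm (\<rho> ^ n * ?E) = \<bar>\<rho>\<bar> ^ n * \<bar>?E\<bar>" by (simp add: abs_mult power_abs)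
    also have "\<dots> \<le> \<bar>\<rho>\<bar> ^ n * (K * (real M ^ (CARD('n) - 1) / real M ^ k) ^ n)"
      using abs_expectation_intrinsic_volume_Inter_Cset_sub_le[OF T, of k n]
      by (intro mult_left_mono) (simp_all add: K_def)
    also have "\<dots> = K * z ^ n" unfolding z_def power_mult_distrib by (simp only: mult_ac)
    finally show ?thesis .
  qed
qed

end

section \<open>The limit\<close>

lemma summable_mult_sum:
  fixes f :: "'i \<Rightarrow> nat \<Rightarrow> real"
  assumes "\<And>i. i \<in> I \<Longrightarrow> summable (\<lambda>n. g n * f i n)"
  shows "summable (\<lambda>n. g n * (\<Sum>i\<in>I. c i * f i n))"
  using assms by (simp add: sum_distrib_left mult.left_commute summable_sum summable_mult)

lemma suminf_mult_sum:
  fixes f :: "'i \<Rightarrow> nat \<Rightarrow> real"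
  assumes "\<And>i. i \<in> I \<Longrightarrow> summable (\<lambda>n. g n * f i n)"
  shows "(\<Sum>n. g n * (\<Sum>i\<in>I. c i * f i n)) = (\<Sum>i\<in>I. c i * (\<Sum>n. g n * f i n))"
proof -
  have "(\<Sum>n. g n * (\<Sum>i\<in>I. c i * f i n)) = (\<Sum>n. \<Sum>i\<in>I. c i * (g n * f i n))"
    by (simp only: sum_distrib_left mult.left_commute)
  also have "\<dots> = (\<Sum>i\<in>I. \<Sum>n. c i * (g n * f i n))"
    using assms by (intro suminf_sum summable_mult)
  also have "\<dots> = (\<Sum>i\<in>I. c i * (\<Sum>n. g n * f i n))"
    using assms by (intro sum.cong refl suminf_mult)
  finally show ?thesis .
qed

lemma renewal_limit:
  fixes a b :: "nat \<Rightarrow> real"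
  assumes a0: "a 0 = 0" and rec: "\<And>n. a (Suc n) = \<alpha> + \<beta> * a n + b (Suc n)"
    and \<rho>\<beta>: "\<rho> * \<beta> = 1" and \<rho>: "\<bar>\<rho>\<bar> < 1"
    and summable: "summable (\<lambda>n. \<rho> ^ Suc n * b (Suc n))"
  shows "(\<lambda>n. \<rho> ^ n * a n) \<longlonglongrightarrow> \<alpha> * \<rho> / (1 - \<rho>) + (\<Sum>n. \<rho> ^ Suc n * b (Suc n))"
proof -
  have partial_sums: "\<rho> ^ n * a n = (\<Sum>i<n. \<alpha> * \<rho> * \<rho> ^ i + \<rho> ^ Suc i * b (Suc i))" for n
  proof (induction n)
    case (Suc n)
    have "\<rho> ^ Suc n * a (Suc n) = \<alpha> * \<rho> * \<rho> ^ n + (\<rho> * \<beta>) * (\<rho> ^ n * a n) + \<rho> ^ Suc n * b (Suc n)"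
      by (simp add: rec algebra_simps)
    then show ?case using Suc.IH \<rho>\<beta> by simp
  qed (simp add: a0)
  have "(\<lambda>i. \<alpha> * \<rho> * \<rho> ^ i) sums (\<alpha> * \<rho> * (1 / (1 - \<rho>)))"
    using \<rho> by (intro sums_mult geometric_sums) simp
  from sums_add[OF this summable_sums[OF summable]] show ?thesis
    unfolding sums_def partial_sums by simp
qed

lemma powr_log_quotient:
  fixes x y :: real
  assumes x: "1 < x" and y: "0 < y"
  shows "(1 / x) powr (real n * (ln y / ln x - real k)) = (x ^ k / y) ^ n"
proof -
  have "(1 / x) powr (real n * (ln y / ln x - real k)) = exp (real n * (real k * ln x - ln y))"
    using x by (simp add: powr_def ln_div field_simps)
  also have "real k * ln x - ln y = ln (x ^ k / y)" using x y by (simp add: ln_div ln_realpow)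
  also have "exp (real n * ln (x ^ k / y)) = (x ^ k / y) ^ n"
    using x y by (simp add: exp_of_nat_mult)
  finally show ?thesis .
qed

lemma power_less_of_less_log_quotient:
  fixes x y :: real
  assumes x: "1 < x" and y: "0 < y" and k: "real k < ln y / ln x"
  shows "x ^ k < y"
proof -
  have "ln (x ^ k) < ln y" using k x by (simp add: ln_realpow pos_less_divide_eq)
  then show ?thesis using x y by simp
qed

context fractal_percolation
begin

lemma expectation_intrinsic_volume_Cset_limit:
  assumes Mp: "1 < real M * p" and k: "k \<le> CARD('n)" "real M ^ k < real M ^ CARD('n) * p"
  defines "\<rho> \<equiv> real M ^ k / (real M ^ CARD('n) * p)"
  shows "(\<forall>T. T \<subseteq> grid_idx M 1 \<and> 2 \<le> card T \<longrightarrow>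
      summable (\<lambda>n. \<rho> ^ Suc n * expectation (\<lambda>\<omega>. intrinsic_volume k
        (\<Inter>jj\<in>T. Cset_sub M (\<lambda>m i. X m i \<omega>) (Suc n) jj :: (real^'n) set)))) \<and>
    (\<lambda>n. \<rho> ^ n * expectation (\<lambda>\<omega>. intrinsic_volume k (Cset M (\<lambda>m i. X m i \<omega>) n :: (real^'n) set)))
    \<longlonglongrightarrow> intrinsic_volume k (cbox (0::real^'n) 1) *
        (real M ^ (CARD('n) - k) * (1 - p)) / (real M ^ (CARD('n) - k) * p - 1) +
      (\<Sum>T | T \<subseteq> grid_idx M 1 \<and> 2 \<le> card T. (-1) ^ (card T - 1) *
        (\<Sum>n. \<rho> ^ Suc n * expectation (\<lambda>\<omega>. intrinsic_volume k
          (\<Inter>jj\<in>T. Cset_sub M (\<lambda>m i. X m i \<omega>) (Suc n) jj :: (real^'n) set))))"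
proof -
  let ?TT = "{T. T \<subseteq> (grid_idx M 1 :: ('n \<Rightarrow> nat) set) \<and> 2 \<le> card T}"
  let ?c = "\<lambda>n T. expectation (\<lambda>\<omega>. intrinsic_volume k (\<Inter>jj\<in>T. Cset_sub M (\<lambda>m i. X m i \<omega>) n jj :: (real^'n) set))"
  define q where "q = intrinsic_volume k (cbox (0::real^'n) 1)"
  have "0 < real M * p" using Mp by linarith
  from zero_less_mult_pos[OF this] M have p0: "0 < p" by simp
  have "0 < real M ^ k" "0 < real M ^ CARD('n) * p" using p0 M by simp_all
  then have \<rho>: "0 < \<rho>" "\<rho> < 1" using k(2) unfolding \<rho>_def by (simp_all add: divide_less_eq_1)
  have "real M ^ CARD('n) = real M * real M ^ (CARD('n) - 1)"
    using power_Suc[of "real M" "CARD('n) - 1"] by simp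
  then have "\<bar>\<rho>\<bar> * real M ^ (CARD('n) - 1) = real M ^ k / (real M * p)"
    using \<rho>(1) M p0 by (simp add: \<rho>_def)
  also have "\<dots> < real M ^ k" using Mp M by (simp add: divide_less_eq)
  finally have summable: "summable (\<lambda>n. \<rho> ^ Suc n * ?c (Suc n) T)" if "T \<in> ?TT" for T
    using that summable_Suc_iff[of "\<lambda>n. \<rho> ^ n * ?c n T"]
    by (simp add: summable_expectation_intrinsic_volume_Inter_Cset_sub)
  have "(\<lambda>n. \<rho> ^ n * expectation (\<lambda>\<omega>. intrinsic_volume k (Cset M (\<lambda>m i. X m i \<omega>) n :: (real^'n) set)))
      \<longlonglongrightarrow> real M ^ CARD('n) * (1 / real M) ^ k * ((1 - p) * q) * \<rho> / (1 - \<rho>) +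
        (\<Sum>n. \<rho> ^ Suc n * (\<Sum>T\<in>?TT. (-1) ^ (card T - 1) * ?c (Suc n) T))"
  proof (rule renewal_limit[where \<beta> = "real M ^ CARD('n) * (1 / real M) ^ k * p"])
    show "summable (\<lambda>n. \<rho> ^ Suc n * (\<Sum>T\<in>?TT. (-1) ^ (card T - 1) * ?c (Suc n) T))"
      using summable
      by (intro summable_mult_sum[where g="\<lambda>n. \<rho> ^ Suc n" and f="\<lambda>T n. ?c (Suc n) T"]) simp
  qed (use \<rho> p0 M in \<open>simp_all add: Cset_0 expectation_intrinsic_volume_Cset_Suc q_def
      \<rho>_def power_one_over algebra_simps\<close>)
  moreover have "real M ^ CARD('n) = real M ^ k * real M ^ (CARD('n) - k)"
    by (subst power_add[symmetric]) (simp add: k(1))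
  then have "real M ^ CARD('n) * (1 / real M) ^ k * ((1 - p) * q) * \<rho> / (1 - \<rho>) =
      q * (real M ^ (CARD('n) - k) * (1 - p)) / (real M ^ (CARD('n) - k) * p - 1)"
    using k(2) p0 M unfolding \<rho>_def by (simp add: field_simps)
  moreover have "(\<Sum>n. \<rho> ^ Suc n * (\<Sum>T\<in>?TT. (-1) ^ (card T - 1) * ?c (Suc n) T)) =
      (\<Sum>T\<in>?TT. (-1) ^ (card T - 1) * (\<Sum>n. \<rho> ^ Suc n * ?c (Suc n) T))"
    using summable
    by (intro suminf_mult_sum[where g="\<lambda>n. \<rho> ^ Suc n" and f="\<lambda>T n. ?c (Suc n) T"]) simp
  ultimately show ?thesis using summable by (simp add: q_def)
qed

end

theorem theorem5p1:
  fixes Pr :: "'a measure"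
    and X :: "nat \<Rightarrow> ('n::finite \<Rightarrow> nat) \<Rightarrow> 'a \<Rightarrow> bool"
    and M :: nat and p :: real and k :: nat
  defines "d \<equiv> CARD('n)"
  defines "D \<equiv> ln (real M ^ d * p) / ln (real M)"
  defines "r \<equiv> 1 / real M"
  assumes P: "prob_space Pr"
    and M2: "M \<ge> 2"
    and p: "1 / real M < p" "p \<le> 1"
    and meas: "\<And>n i. X n i \<in> measurable Pr (count_space UNIV)"
    and indep: "prob_space.indep_vars Pr (\<lambda>_. count_space UNIV) (\<lambda>(n, i). X n i)
                  {(n, i). n \<ge> 1 \<and> i \<in> grid_idx M n}"
    and bern: "\<And>n i. n \<ge> 1 \<Longrightarrow> i \<in> grid_idx M n \<Longrightarrow> prob_space.prob Pr {\<omega> \<in> space Pr. X n i \<omega>} = p"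
    and k: "k \<le> d" "real k < D"
  shows
    "(\<forall>T. T \<subseteq> grid_idx M 1 \<and> card T \<ge> 2 \<longrightarrow>
        summable (\<lambda>n. r powr (real (Suc n) * (D - real k)) *
          prob_space.expectation Pr (\<lambda>\<omega>. intrinsic_volume k
             (\<Inter>jj\<in>T. Cset_sub M (\<lambda>m i. X m i \<omega>) (Suc n) jj)))) \<and>
     (\<lambda>n. r powr (real n * (D - real k)) *
          prob_space.expectation Pr (\<lambda>\<omega>. intrinsic_volume k (Cset M (\<lambda>m i. X m i \<omega>) n)))
     \<longlonglongrightarrow>
       (intrinsic_volume k (cbox (0::real^'n) 1) *
          (real M ^ (d - k) * (1 - p)) / (real M ^ (d - k) * p - 1)
        + (\<Sum>T\<in>{T. T \<subseteq> grid_idx M 1 \<and> card T \<ge> 2}.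
             (-1) ^ (card T - 1) *
             (\<Sum>n. r powr (real (Suc n) * (D - real k)) *
                prob_space.expectation Pr (\<lambda>\<omega>. intrinsic_volume k
                  (\<Inter>jj\<in>T. Cset_sub M (\<lambda>m i. X m i \<omega>) (Suc n) jj)))))"
proof -
  have M1: "1 \<le> M" and Mr: "1 < real M" using M2 by simp_all
  have Mp: "1 < real M * p" using p(1) M2 by (simp add: field_simps)
  then have "0 < real M * p" by linarith
  from zero_less_mult_pos[OF this] Mr have p0: "0 < p" by simp
  interpret fractal_percolation Pr X M p
    using M1 p p0 meas indep bern
    by (intro fractal_percolation.intro fractal_percolation_axioms.intro P) (simp_all add: coin_idx_def)
  have "0 < real M ^ d * p" using Mr p0 by simp
  from power_less_of_less_log_quotient[OF Mr this k(2)[unfolded D_def]]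
  have Mk: "real M ^ k < real M ^ CARD('n) * p" unfolding d_def .
  have "r powr (real n * (D - real k)) = (real M ^ k / (real M ^ CARD('n) * p)) ^ n" for n
    unfolding r_def D_def d_def using Mr p0 by (simp add: powr_log_quotient)
  then show ?thesis
    unfolding d_def by (simp only:) (rule expectation_intrinsic_volume_Cset_limit[OF Mp k(1)[unfolded d_def] Mk])
qed

end
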